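(* Every $\lambda\in\Sigma_0$ is an eigenvalue of infinite multiplicity of the self-adjoint Hamiltonian $\mathcal{A}$. The corresponding eigenspace is the closed linear span of simple loop states, i.e. eigenfunctions $(u,\omega)$ whose edge part $u$ is supported on the six edges of a single hexagon and whose vertex values $\omega_v$ vanish at all vertices.
   Context: Fix $a>0$, $\kappa^{-1}\ge0$, $m\ge0$, $\rho:=a\kappa^{-1}$, real $q_0\in L^\infty(0,1)$ with $q_0(x)=q_0(1-x)$. $G$ is the hexagonal (honeycomb) lattice graph in $\mathbb R^2$ with edges of length 1, each identified with $[0,1]$ (potential $q_0$ on every edge); a hexagon is the 6-cycle bounding a face. For an edge $e$ and endpoint $v$, $\partial_nu_e(v)$ is the outward derivative ($-u_e'(0)$ at $x=0$, $u_e'(1)$ at $x=1$). Self-adjoint realization of $\mathcal A$: if $m>0$, on $\mathcal H=L^2(G)\oplus\ell^2(\mathcal V)$ with inner product $\sum_e\int_0^1u_e\bar w_e\,dx+m\sum_v\omega_v\bar\eta_v$, domain the pairs $(u,\omega)$ with $u_e\in H^2(0,1)$, $\sum_e\|u_e\|_{H^2}^2<\infty$, $\omega\in\ell^2(\mathcal V)$ and $u_e(v)+\rho\,\partial_nu_e(v)=\omega_v$ for every vertex $v$ and every edge $e\ni v$; $\mathcal A(u,\omega)=\big((-au_e''+q_0u_e)_e,\ (m^{-1}a\sum_{e\ni v}\partial_nu_e(v))_v\big)$. If $m=0$: on $L^2(G)$, $u\mapsto(-au_e''+q_0u_e)_e$ with domain the $u$ with $u_e\in H^2$, $\sum_e\|u_e\|^2_{H^2}<\infty$,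 such that at every vertex $u_e(v)+\rho\partial_nu_e(v)=:\omega_v$ is independent of $e\ni v$ and $\sum_{e\ni v}\partial_nu_e(v)=0$. Thus eigenfunctions satisfy $-au_e''+q_0u_e=\lambda u_e$, the semi-rigidity conditions, and $a\sum_{e\ni v}\partial_nu_e(v)=\lambda m\omega_v$. $\Sigma_0$: set of $\lambda\in\mathbb R$ for which $-au''+q_0u=\lambda u$ on $(0,1)$, $u(0)-\rho u'(0)=0$, $u(1)+\rho u'(1)=0$ has a nontrivial solution. *)

theory Defs
  imports "HOL-Analysis.Analysis"
begin

text \<open>Vertices: two sublattices A (flag True) and B (flag False), indexed by a cell in Z^2.
  Edges: ((p,q),d) joins the A-vertex of cell (p,q) with the B-vertex of cell (p,q) - delta d,
  where delta D0 = (0,0), delta D1 = (1,0), delta D2 = (0,1).  Every vertex has degree 3.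
  Each edge is identified with [0,1]: x = 0 is the A-end (tail), x = 1 is the B-end (head).\<close>

datatype dir = D0 | D1 | D2

type_synonym vertex = "(int \<times> int) \<times> bool"
type_synonym edge = "(int \<times> int) \<times> dir"

fun delta :: "dir \<Rightarrow> int \<times> int" where
  "delta D0 = (0, 0)"
| "delta D1 = (1, 0)"
| "delta D2 = (0, 1)"

definition tail :: "edge \<Rightarrow> vertex" where
  "tail e = (fst e, True)"

definition head :: "edge \<Rightarrow> vertex" where
  "head e = ((fst (fst e) - fst (delta (snd e)), snd (fst e) - snd (delta (snd e))), False)"

text \<open>The hexagon (face) attached to cell (i,j): the 6-cycle
  A(i,j) - B(i,j) - A(i+1,j) - B(i+1,j-1) - A(i+1,j-1) - B(i,j-1) - A(i,j).
  These are exactly the faces of the honeycomb.\<close>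

definition hexagon :: "int \<times> int \<Rightarrow> edge set" where
  "hexagon c = (case c of (i, j) \<Rightarrow>
     {((i, j), D0), ((i + 1, j), D1), ((i + 1, j), D2),
      ((i + 1, j - 1), D0), ((i + 1, j - 1), D1), ((i, j), D2)})"

text \<open>H2_triple y y1 y2: y belongs to H^2(0,1), with y1 its (classical) derivative on [0,1]
  (one-sided at the endpoints), y1 absolutely continuous with y1(x) = y1(0) + int_0^x y2,
  and the weak second derivative y2 in L^2(0,1).\<close>

definition H2_triple :: "(real \<Rightarrow> complex) \<Rightarrow> (real \<Rightarrow> complex) \<Rightarrow> (real \<Rightarrow> complex) \<Rightarrow> bool" where
  "H2_triple y y1 y2 \<longleftrightarrow>
     (\<forall>x\<in>{0..1}. (y has_vector_derivative y1 x) (at x within {0..1})) \<and>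
     set_borel_measurable lborel {0..1} y2 \<and>
     set_integrable lborel {0..1} (\<lambda>x. (cmod (y2 x))\<^sup>2) \<and>
     (\<forall>x\<in>{0..1}. (y2 has_integral (y1 x - y1 0)) {0..x})"

definition solves_ode :: "real \<Rightarrow> (real \<Rightarrow> real) \<Rightarrow> real \<Rightarrow> (real \<Rightarrow> complex) \<Rightarrow> (real \<Rightarrow> complex) \<Rightarrow> bool" where
  "solves_ode a q0 lam y y2 \<longleftrightarrow>
     (AE x in lborel. x \<in> {0..1} \<longrightarrow>
        - of_real a * y2 x + of_real (q0 x) * y x = of_real lam * y x)"

definition rho :: "real \<Rightarrow> real \<Rightarrow> real" where
  "rho a kinv = a * kinv"

text \<open>Sigma_0 (kinv stands for kappa^{-1}).\<close>

definition Sigma0 :: "real \<Rightarrow> real \<Rightarrow> (real \<Rightarrow> real) \<Rightarrow> real set" where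
  "Sigma0 a kinv q0 = {lam. \<exists>y y1 y2. H2_triple y y1 y2 \<and> solves_ode a q0 lam y y2 \<and>
      y 0 - of_real (rho a kinv) * y1 0 = 0 \<and> y 1 + of_real (rho a kinv) * y1 1 = 0 \<and>
      (\<exists>x\<in>{0..1}. y x \<noteq> 0)}"

text \<open>A state is a pair (u, omega) of edge functions and vertex values.  For m = 0 the weight
  m kills the vertex part of the inner product, so the same formulas describe L^2(G).\<close>

type_synonym state = "(edge \<Rightarrow> real \<Rightarrow> complex) \<times> (vertex \<Rightarrow> complex)"

definition in_H :: "real \<Rightarrow> state \<Rightarrow> bool" where
  "in_H m f \<longleftrightarrow>
     (\<forall>e. set_borel_measurable lborel {0..1} (fst f e) \<and>
          set_integrable lborel {0..1} (\<lambda>x. (cmod (fst f e x))\<^sup>2)) \<and>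
     (\<lambda>e. LINT x:{0..1}|lborel. (cmod (fst f e x))\<^sup>2) summable_on UNIV \<and>
     (m > 0 \<longrightarrow> (\<lambda>v. (cmod (snd f v))\<^sup>2) summable_on UNIV)"

definition Hinner :: "real \<Rightarrow> state \<Rightarrow> state \<Rightarrow> complex" where
  "Hinner m f g =
     (\<Sum>\<^sub>\<infinity>e. LINT x:{0..1}|lborel. fst f e x * cnj (fst g e x))
     + of_real m * (\<Sum>\<^sub>\<infinity>v. snd f v * cnj (snd g v))"

definition Hnorm2 :: "real \<Rightarrow> state \<Rightarrow> real" where
  "Hnorm2 m f =
     (\<Sum>\<^sub>\<infinity>e. LINT x:{0..1}|lborel. (cmod (fst f e x))\<^sup>2)
     + m * (\<Sum>\<^sub>\<infinity>v. (cmod (snd f v))\<^sup>2)"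

definition state_diff :: "state \<Rightarrow> state \<Rightarrow> state" where
  "state_diff f g = ((\<lambda>e x. fst f e x - fst g e x), (\<lambda>v. snd f v - snd g v))"

definition lincomb :: "(nat \<Rightarrow> complex) \<Rightarrow> (nat \<Rightarrow> state) \<Rightarrow> nat \<Rightarrow> state" where
  "lincomb c F n = ((\<lambda>e x. \<Sum>i<n. c i * fst (F i) e x), (\<lambda>v. \<Sum>i<n. c i * snd (F i) v))"

text \<open>(u, omega) lies in the domain of the self-adjoint realisation and satisfies
  A (u, omega) = lambda (u, omega)  (for m > 0), resp. u in the domain with A u = lambda u
  and omega the common vertex value (for m = 0).  The outward derivative at the tail (x = 0) is - U1 e 0,
  at the head (x = 1) it is U1 e 1.\<close>

definition is_eigenfunction :: "real \<Rightarrow> real \<Rightarrow> real \<Rightarrow> (real \<Rightarrow> real) \<Rightarrow> real \<Rightarrow> state \<Rightarrow> bool" where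
  "is_eigenfunction a kinv m q0 lam f \<longleftrightarrow>
     (\<exists>U1 U2.
        (\<forall>e. H2_triple (fst f e) (U1 e) (U2 e) \<and> solves_ode a q0 lam (fst f e) (U2 e)) \<and>
        (\<lambda>e. LINT x:{0..1}|lborel.
              (cmod (fst f e x))\<^sup>2 + (cmod (U1 e x))\<^sup>2 + (cmod (U2 e x))\<^sup>2) summable_on UNIV \<and>
        (\<lambda>v. (cmod (snd f v))\<^sup>2) summable_on UNIV \<and>
        (\<forall>e. fst f e 0 - of_real (rho a kinv) * U1 e 0 = snd f (tail e) \<and>
             fst f e 1 + of_real (rho a kinv) * U1 e 1 = snd f (head e)) \<and>
        (\<forall>v. of_real a * ((\<Sum>e\<in>{e. tail e = v}. - U1 e 0) + (\<Sum>e\<in>{e. head e = v}. U1 e 1))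
              = of_real (lam * m) * snd f v))"

definition is_loop_state :: "real \<Rightarrow> real \<Rightarrow> real \<Rightarrow> (real \<Rightarrow> real) \<Rightarrow> real \<Rightarrow> state \<Rightarrow> bool" where
  "is_loop_state a kinv m q0 lam f \<longleftrightarrow>
     is_eigenfunction a kinv m q0 lam f \<and>
     (\<exists>c. \<forall>e. e \<notin> hexagon c \<longrightarrow> (\<forall>x\<in>{0..1}. fst f e x = 0)) \<and>
     (\<forall>v. snd f v = 0)"

definition in_closed_loop_span :: "real \<Rightarrow> real \<Rightarrow> real \<Rightarrow> (real \<Rightarrow> real) \<Rightarrow> real \<Rightarrow> state \<Rightarrow> bool" where
  "in_closed_loop_span a kinv m q0 lam f \<longleftrightarrow>
     (\<forall>\<epsilon>>0. \<exists>n c F. (\<forall>i<n. is_loop_state a kinv m q0 lam (F i)) \<and>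
                      Hnorm2 m (state_diff f (lincomb c F n)) < \<epsilon>)"

end

theory Submission
  imports Defs
begin

text \<open>Fix an eigenfunction \<open>\<phi>\<close> of the edge problem with Robin conditions at both ends.
  By uniqueness for the edge equation, the Robin data at the two ends of any solution are
  proportional with one factor common to all edges; along a row of the lattice this makes the
  vertex values of an eigenfunction constant, hence zero by square-summability. So the
  eigenfunctions are exactly the states \<open>u\<^sub>e = c\<^sub>e \<phi>\<close> with \<open>c\<close> a square-summable divergence-free
  flow. Such a flow is the curl of a potential on the hexagonal faces; truncating the potential
  and multiplying it by a cutoff that decays like the logarithm of the radius (the plane has
  zero capacity) approximates \<open>c\<close> by finite combinations of hexagon flows, i.e. of simple loop
  states. Disjoint hexagons give infinitely many orthonormal loop states, and projecting onto
  \<open>\<phi>\<close> edgewise shows that limits of loop states are again eigenfunctions.\<close>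

section \<open>Uniqueness for the edge equation\<close>

lemma gronwall_vanishing:
  fixes N :: "real \<Rightarrow> real"
  assumes cont: "continuous_on {0..1} N" and nonneg: "\<And>x. x \<in> {0..1} \<Longrightarrow> 0 \<le> N x"
    and C: "C > 0" and bound: "\<And>x. x \<in> {0..1} \<Longrightarrow> N x \<le> C * integral {0..x} N"
    and x: "x \<in> {0..1}"
  shows "N x = 0"
proof -
  define L where "L = 2 * C"
  have L: "L > 0" using C by (simp add: L_def)
  define w where "w t = exp (- (L * t)) * N t" for t
  have "continuous_on {0..1} w" unfolding w_def by (intro continuous_intros cont)
  then obtain t0 where t0: "t0 \<in> {0..1}" "\<And>t. t \<in> {0..1} \<Longrightarrow> w t \<le> w t0"
    using continuous_attains_sup[OF compact_Icc _ \<open>continuous_on {0..1} w\<close>] by auto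
  define E where "E = w t0"
  have "E \<ge> 0" using nonneg[OF t0(1)] by (simp add: E_def w_def)
  have exp_cancel: "exp (L * t) * exp (- (L * t)) = 1" "exp (- (L * t)) * exp (L * t) = 1" for t
    by (simp_all flip: exp_add)
  have N_le: "N t \<le> E * exp (L * t)" if "t \<in> {0..1}" for t
  proof -
    have "N t = exp (L * t) * w t" by (simp add: w_def exp_cancel mult.assoc[symmetric])
    then show ?thesis using t0(2)[OF that] by (simp add: E_def mult.commute)
  qed
  have half: "w t \<le> E / 2" if t: "t \<in> {0..1}" for t
  proof -
    have "((\<lambda>s. E * exp (L * s)) has_integral (E / L * exp (L * t) - E / L * exp (L * 0))) {0..t}"
      using t L by (intro fundamental_theorem_of_calculus)
        (auto intro!: derivative_eq_intros simp flip: has_real_derivative_iff_has_vector_derivative)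
    then have exp_int: "((\<lambda>s. E * exp (L * s)) has_integral (E / L * exp (L * t) - E / L)) {0..t}"
      by simp
    have "integral {0..t} N \<le> E / L * exp (L * t) - E / L"
      using t N_le exp_int
      by (intro has_integral_le[OF integrable_integral exp_int])
        (auto intro!: integrable_continuous_interval continuous_on_subset[OF cont])
    also have "\<dots> \<le> E / L * exp (L * t)" using \<open>E \<ge> 0\<close> L by simp
    finally have "N t \<le> C * (E / L * exp (L * t))"
      using bound[OF t] C by (meson mult_left_mono order.trans less_imp_le)
    then have "N t \<le> exp (L * t) * (E / 2)" using C by (simp add: L_def mult.commute)
    then have "w t \<le> exp (- (L * t)) * (exp (L * t) * (E / 2))"
      unfolding w_def by (intro mult_left_mono) auto
    then show ?thesis by (simp add: mult.assoc[symmetric] exp_cancel)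
  qed
  have "E \<le> 0" using half[OF t0(1)] by (simp add: E_def)
  then have "w x \<le> 0" using half[OF x] by simp
  then show ?thesis using nonneg[OF x] by (simp add: w_def mult_le_0_iff)
qed

lemma ode_vanishing_left:
  fixes y y1 z :: "real \<Rightarrow> complex"
  assumes deriv: "\<And>x. x \<in> {0..1} \<Longrightarrow> (y has_vector_derivative y1 x) (at x within {0..1})"
    and int: "\<And>x. x \<in> {0..1} \<Longrightarrow> (z has_integral (y1 x - y1 0)) {0..x}"
    and bound: "\<And>x. x \<in> {0..1} \<Longrightarrow> cmod (z x) \<le> K * cmod (y x)" and K: "K \<ge> 0"
    and init: "y 0 = 0" "y1 0 = 0" and x: "x \<in> {0..1}"
  shows "y x = 0 \<and> y1 x = 0"
proof -
  have y_cont: "continuous_on {0..1} y"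
    unfolding continuous_on_eq_continuous_within using deriv has_vector_derivative_continuous by blast
  have y1_eq: "y1 t = y1 0 + integral {0..t} z" if "t \<in> {0..1}" for t
    using integral_unique[OF int[OF that]] by simp
  have "continuous_on {0..1} (\<lambda>t. y1 0 + integral {0..t} z)"
    using int[of 1] by (intro continuous_intros indefinite_integral_continuous_1) auto
  then have y1_cont: "continuous_on {0..1} y1" by (rule continuous_on_eq) (metis y1_eq)
  define N where "N t = cmod (y t) + cmod (y1 t)" for t
  have N_cont: "continuous_on {0..1} N" unfolding N_def by (intro continuous_intros y_cont y1_cont)
  have "N t \<le> (K + 1) * integral {0..t} N" if t: "t \<in> {0..1}" for t
  proof -
    have sub: "{0..t} \<subseteq> {0..1}" using t by auto
    have "(y1 has_integral (y t - y 0)) {0..t}"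
      using t by (intro fundamental_theorem_of_calculus)
        (auto intro!: has_vector_derivative_within_subset[OF deriv])
    then have y_int: "(y1 has_integral y t) {0..t}" using init by simp
    have z_int: "(z has_integral y1 t) {0..t}" using int[OF t] init by simp
    have int1: "(\<lambda>s. cmod (y1 s)) integrable_on {0..t}"
      and int2: "(\<lambda>s. K * cmod (y s)) integrable_on {0..t}"
      and int3: "(\<lambda>s. (K + 1) * N s) integrable_on {0..t}"
      by (intro integrable_continuous_interval continuous_intros
          continuous_on_subset[OF y_cont sub] continuous_on_subset[OF y1_cont sub]
          continuous_on_subset[OF N_cont sub])+
    have "cmod (y t) \<le> integral {0..t} (\<lambda>s. cmod (y1 s))"
      using integral_norm_bound_integral[OF has_integral_integrable[OF y_int] int1]
        integral_unique[OF y_int] by simp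
    moreover have "cmod (y1 t) \<le> integral {0..t} (\<lambda>s. K * cmod (y s))"
      using integral_norm_bound_integral[OF has_integral_integrable[OF z_int] int2] bound sub
        integral_unique[OF z_int] by auto
    moreover have "integral {0..t} (\<lambda>s. cmod (y1 s)) + integral {0..t} (\<lambda>s. K * cmod (y s))
        \<le> integral {0..t} (\<lambda>s. (K + 1) * N s)"
      using K by (subst integral_add[OF int1 int2, symmetric])
        (intro integral_le integrable_add int1 int2 int3, auto simp: N_def algebra_simps)
    ultimately show ?thesis by (simp add: N_def[abs_def])
  qed
  then have "N x = 0"
    using gronwall_vanishing[OF N_cont _ _ _ x, of "K + 1"] K by (simp add: N_def)
  then show ?thesis by (simp add: N_def add_nonneg_eq_0_iff)
qed

lemma ode_vanishing_right:
  fixes y y1 z :: "real \<Rightarrow> complex"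
  assumes deriv: "\<And>x. x \<in> {0..1} \<Longrightarrow> (y has_vector_derivative y1 x) (at x within {0..1})"
    and int: "\<And>x. x \<in> {0..1} \<Longrightarrow> (z has_integral (y1 x - y1 0)) {0..x}"
    and bound: "\<And>x. x \<in> {0..1} \<Longrightarrow> cmod (z x) \<le> K * cmod (y x)" and K: "K \<ge> 0"
    and final: "y 1 = 0" "y1 1 = 0" and x: "x \<in> {0..1}"
  shows "y x = 0 \<and> y1 x = 0"
proof -
  define Y where "Y t = y (1 - t)" for t
  define Y1 where "Y1 t = - y1 (1 - t)" for t
  define Z where "Z t = z (1 - t)" for t
  have refl: "1 - t \<in> {0..1}" if "t \<in> {0..1}" for t :: real using that by auto
  have "(Y has_vector_derivative Y1 t) (at t within {0..1})" if t: "t \<in> {0..1}" for t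
  proof -
    have "((\<lambda>s. 1 - s) has_vector_derivative -1) (at t within {0..1})"
      using has_vector_derivative_diff[OF has_vector_derivative_const has_vector_derivative_id] by simp
    moreover have "(y has_vector_derivative y1 (1 - t)) (at (1 - t) within (\<lambda>s. 1 - s) ` {0..1})"
      using deriv[OF refl[OF t]] by simp
    ultimately have "((y \<circ> (\<lambda>s. 1 - s)) has_vector_derivative (- 1) *\<^sub>R y1 (1 - t)) (at t within {0..1})"
      by (rule vector_diff_chain_within)
    then show ?thesis by (simp add: Y_def[abs_def] Y1_def o_def)
  qed
  moreover have "(Z has_integral (Y1 t - Y1 0)) {0..t}" if t: "t \<in> {0..1}" for t
  proof -
    have whole: "(z has_integral (y1 1 - y1 0)) {0..1}" using int[of 1] by simp
    have "z integrable_on {1 - t..1}"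
      using integrable_subinterval_real[OF has_integral_integrable[OF whole]] t by auto
    then obtain J where J: "(z has_integral J) {1 - t..1}" by blast
    have "(z has_integral (y1 (1 - t) - y1 0 + J)) {0..1}"
      using has_integral_combine[OF _ _ int[OF refl[OF t]] J] t by auto
    from has_integral_unique[OF this whole] have "J = y1 1 - y1 (1 - t)" by (simp add: algebra_simps)
    then have "((\<lambda>s. z (s + 1)) has_integral (y1 1 - y1 (1 - t))) {- t..0}"
      using has_integral_shift_real_ivl[OF J, of 1] by simp
    then have "((\<lambda>s. z (- s + 1)) has_integral (y1 1 - y1 (1 - t))) {0..t}"
      using has_integral_reflect_real[of "\<lambda>s. z (s + 1)" _ 0 "- t"] by simp
    then show ?thesis by (simp add: Z_def[abs_def] Y1_def)
  qed
  moreover have "cmod (Z t) \<le> K * cmod (Y t)" if "t \<in> {0..1}" for t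
    using bound[OF refl[OF that]] by (simp add: Z_def Y_def)
  moreover have "Y 0 = 0" "Y1 0 = 0" using final by (simp_all add: Y_def Y1_def)
  ultimately have "Y (1 - x) = 0 \<and> Y1 (1 - x) = 0"
    using ode_vanishing_left[of Y Y1 Z K "1 - x"] K refl[OF x] by blast
  then show ?thesis by (simp add: Y_def Y1_def)
qed

section \<open>Square-integrable and \<open>H\<^sup>2\<close> functions on the unit interval\<close>

lemma norm_lincomb_sq_le:
  "(cmod (c * a + d * b))\<^sup>2 \<le> 2 * (cmod c)\<^sup>2 * (cmod a)\<^sup>2 + 2 * (cmod d)\<^sup>2 * (cmod b)\<^sup>2"
proof -
  have "(cmod (c * a + d * b))\<^sup>2 \<le> (cmod c * cmod a + cmod d * cmod b)\<^sup>2"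
    by (intro power_mono) (auto simp: norm_mult intro: norm_triangle_le)
  also have "\<dots> \<le> 2 * (cmod c)\<^sup>2 * (cmod a)\<^sup>2 + 2 * (cmod d)\<^sup>2 * (cmod b)\<^sup>2"
    using sum_squares_ge_zero[of "cmod c * cmod a - cmod d * cmod b" 0]
    by (simp add: power2_eq_square algebra_simps)
  finally show ?thesis .
qed

lemma set_borel_measurable_lincomb:
  fixes f g :: "real \<Rightarrow> complex"
  assumes "set_borel_measurable lborel A f" "set_borel_measurable lborel A g"
  shows "set_borel_measurable lborel A (\<lambda>x. c * f x + d * g x)"
proof -
  have "(\<lambda>x. c * (indicator A x *\<^sub>R f x) + d * (indicator A x *\<^sub>R g x)) \<in> borel_measurable lborel"
    using assms unfolding set_borel_measurable_def by measurable
  moreover have "(\<lambda>x. c * (indicator A x *\<^sub>R f x) + d * (indicator A x *\<^sub>R g x))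
      = (\<lambda>x. indicator A x *\<^sub>R (c * f x + d * g x))"
    by (auto simp: indicator_def fun_eq_iff)
  ultimately show ?thesis unfolding set_borel_measurable_def by simp
qed

lemma set_borel_measurable_norm_sq:
  fixes f :: "real \<Rightarrow> complex"
  assumes "set_borel_measurable lborel A f"
  shows "set_borel_measurable lborel A (\<lambda>x. (cmod (f x))\<^sup>2)"
proof -
  have "(\<lambda>x. (cmod (indicator A x *\<^sub>R f x))\<^sup>2) \<in> borel_measurable lborel"
    using assms unfolding set_borel_measurable_def by measurable
  moreover have "(\<lambda>x. (cmod (indicator A x *\<^sub>R f x))\<^sup>2) = (\<lambda>x. indicator A x *\<^sub>R (cmod (f x))\<^sup>2)"
    by (auto simp: indicator_def fun_eq_iff)
  ultimately show ?thesis unfolding set_borel_measurable_def by simp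
qed

lemma set_borel_measurable_mult_cnj:
  fixes f g :: "real \<Rightarrow> complex"
  assumes "set_borel_measurable lborel A f" "set_borel_measurable lborel A g"
  shows "set_borel_measurable lborel A (\<lambda>x. f x * cnj (g x))"
proof -
  have "(\<lambda>x. cnj (indicator A x *\<^sub>R g x)) \<in> borel_measurable lborel"
    by (rule borel_measurable_continuous_on[of cnj, OF _ assms(2)[unfolded set_borel_measurable_def]])
      (auto intro: continuous_intros)
  then have "(\<lambda>x. (indicator A x *\<^sub>R f x) * cnj (indicator A x *\<^sub>R g x)) \<in> borel_measurable lborel"
    using assms(1) unfolding set_borel_measurable_def by measurable
  moreover have "(\<lambda>x. (indicator A x *\<^sub>R f x) * cnj (indicator A x *\<^sub>R g x))
      = (\<lambda>x. indicator A x *\<^sub>R (f x * cnj (g x)))"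
    by (auto simp: indicator_def fun_eq_iff)
  ultimately show ?thesis unfolding set_borel_measurable_def by simp
qed

lemma set_integrable_norm_sq_lincomb:
  fixes f g :: "real \<Rightarrow> complex"
  assumes "set_borel_measurable lborel A f" "set_borel_measurable lborel A g"
    "set_integrable lborel A (\<lambda>x. (cmod (f x))\<^sup>2)" "set_integrable lborel A (\<lambda>x. (cmod (g x))\<^sup>2)"
  shows "set_integrable lborel A (\<lambda>x. (cmod (c * f x + d * g x))\<^sup>2)"
proof (rule set_integrable_bound)
  show "set_integrable lborel A (\<lambda>x. 2 * (cmod c)\<^sup>2 * (cmod (f x))\<^sup>2 + 2 * (cmod d)\<^sup>2 * (cmod (g x))\<^sup>2)"
    using assms(3,4) by (intro set_integral_add set_integrable_mult_right) auto
  show "set_borel_measurable lborel A (\<lambda>x. (cmod (c * f x + d * g x))\<^sup>2)"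
    by (intro set_borel_measurable_norm_sq set_borel_measurable_lincomb assms(1,2))
  show "AE x\<in>A in lborel. norm ((cmod (c * f x + d * g x))\<^sup>2)
      \<le> norm (2 * (cmod c)\<^sup>2 * (cmod (f x))\<^sup>2 + 2 * (cmod d)\<^sup>2 * (cmod (g x))\<^sup>2)"
    using norm_lincomb_sq_le[of c "f _" d "g _"] by (auto intro!: AE_I2 order_trans[OF _ abs_ge_self])
qed

lemma set_integrable_mult_cnj:
  fixes f g :: "real \<Rightarrow> complex"
  assumes "set_borel_measurable lborel A f" "set_borel_measurable lborel A g"
    "set_integrable lborel A (\<lambda>x. (cmod (f x))\<^sup>2)" "set_integrable lborel A (\<lambda>x. (cmod (g x))\<^sup>2)"
  shows "set_integrable lborel A (\<lambda>x. f x * cnj (g x))"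
proof (rule set_integrable_bound)
  show "set_integrable lborel A (\<lambda>x. (cmod (f x))\<^sup>2 + (cmod (g x))\<^sup>2)"
    using assms(3,4) by (rule set_integral_add)
  show "set_borel_measurable lborel A (\<lambda>x. f x * cnj (g x))"
    by (rule set_borel_measurable_mult_cnj[OF assms(1,2)])
  have "cmod (f x * cnj (g x)) \<le> (cmod (f x))\<^sup>2 + (cmod (g x))\<^sup>2" for x
  proof -
    have "2 * (cmod (f x) * cmod (g x)) \<le> (cmod (f x))\<^sup>2 + (cmod (g x))\<^sup>2"
      using sum_squares_ge_zero[of "cmod (f x) - cmod (g x)" 0] by (simp add: power2_eq_square algebra_simps)
    moreover have "0 \<le> cmod (f x) * cmod (g x)" by simp
    moreover have "cmod (f x * cnj (g x)) = cmod (f x) * cmod (g x)" by (simp add: norm_mult)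
    ultimately show ?thesis by linarith
  qed
  then show "AE x\<in>A in lborel. norm (f x * cnj (g x)) \<le> norm ((cmod (f x))\<^sup>2 + (cmod (g x))\<^sup>2)"
    by (auto intro!: AE_I2 order_trans[OF _ abs_ge_self])
qed

lemma set_integrable_norm_sq_continuous:
  fixes f :: "real \<Rightarrow> complex"
  assumes "continuous_on {a..b} f"
  shows "set_integrable lborel {a..b} (\<lambda>x. (cmod (f x))\<^sup>2)"
  by (rule borel_integrable_atLeastAtMost') (intro continuous_intros assms)

lemma set_borel_measurable_continuous:
  fixes f :: "real \<Rightarrow> complex"
  assumes "continuous_on {a..b} f"
  shows "set_borel_measurable lborel {a..b} f"
  unfolding set_borel_measurable_def using borel_measurable_continuous_on_indicator[OF _ assms] by simp

lemma set_integrable_Re: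
  fixes f :: "_ \<Rightarrow> complex"
  assumes "set_integrable M A f"
  shows "set_integrable M A (\<lambda>x. Re (f x))" and "(LINT x:A|M. Re (f x)) = Re (LINT x:A|M. f x)"
  using integrable_Re[OF assms[unfolded set_integrable_def]] integral_Re[OF assms[unfolded set_integrable_def]]
  by (simp_all add: set_integrable_def set_lebesgue_integral_def)

lemma H2_triple_continuous:
  assumes "H2_triple y y1 y2"
  shows "continuous_on {0..1} y" "continuous_on {0..1} y1"
proof -
  have deriv: "\<And>x. x \<in> {0..1} \<Longrightarrow> (y has_vector_derivative y1 x) (at x within {0..1})"
    and int: "\<And>x. x \<in> {0..1} \<Longrightarrow> (y2 has_integral (y1 x - y1 0)) {0..x}"
    using assms unfolding H2_triple_def by blast+
  show "continuous_on {0..1} y"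
    unfolding continuous_on_eq_continuous_within using deriv has_vector_derivative_continuous by blast
  have "continuous_on {0..1} (\<lambda>x. y1 0 + integral {0..x} y2)"
    using int[of 1] by (intro continuous_intros indefinite_integral_continuous_1) auto
  then show "continuous_on {0..1} y1"
    by (rule continuous_on_eq) (metis int integral_unique add.commute diff_add_cancel)
qed

lemma H2_triple_lincomb:
  assumes "H2_triple y y1 y2" and "H2_triple z z1 z2"
  shows "H2_triple (\<lambda>x. c * y x + d * z x) (\<lambda>x. c * y1 x + d * z1 x) (\<lambda>x. c * y2 x + d * z2 x)"
  unfolding H2_triple_def
proof (intro conjI ballI)
  fix x :: real assume x: "x \<in> {0..1}"
  show "((\<lambda>x. c * y x + d * z x) has_vector_derivative c * y1 x + d * z1 x) (at x within {0..1})"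
    using assms x unfolding H2_triple_def by (auto intro!: derivative_intros)
  have "((\<lambda>x. c * y2 x + d * z2 x) has_integral (c * (y1 x - y1 0) + d * (z1 x - z1 0))) {0..x}"
    using assms x unfolding H2_triple_def by (auto intro!: has_integral_add has_integral_mult_right)
  then show "((\<lambda>x. c * y2 x + d * z2 x) has_integral (c * y1 x + d * z1 x - (c * y1 0 + d * z1 0))) {0..x}"
    by (simp add: algebra_simps)
next
  show "set_borel_measurable lborel {0..1} (\<lambda>x. c * y2 x + d * z2 x)"
    using assms unfolding H2_triple_def by (intro set_borel_measurable_lincomb) auto
  show "set_integrable lborel {0..1} (\<lambda>x. (cmod (c * y2 x + d * z2 x))\<^sup>2)"
    using assms unfolding H2_triple_def by (intro set_integrable_norm_sq_lincomb) auto
qed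

lemma solves_ode_lincomb:
  assumes "solves_ode a q0 lam y y2" "solves_ode a q0 lam z z2"
  shows "solves_ode a q0 lam (\<lambda>x. c * y x + d * z x) (\<lambda>x. c * y2 x + d * z2 x)"
  using assms unfolding solves_ode_def by eventually_elim (auto simp: algebra_simps)

lemma H2_vanishing:
  assumes H: "H2_triple y y1 y2" and K: "K \<ge> 0"
    and bound: "AE x in lborel. x \<in> {0..1} \<longrightarrow> cmod (y2 x) \<le> K * cmod (y x)"
    and zero: "y 0 = 0 \<and> y1 0 = 0 \<or> y 1 = 0 \<and> y1 1 = 0" and x: "x \<in> {0..1}"
  shows "y x = 0 \<and> y1 x = 0"
proof -
  obtain N where N: "{x \<in> space lborel. \<not> (x \<in> {0..1} \<longrightarrow> cmod (y2 x) \<le> K * cmod (y x))} \<subseteq> N"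
    "N \<in> null_sets lborel"
    using bound by (auto elim!: AE_E simp: null_sets_def)
  have "negligible N" using N(2) by (simp add: negligible_iff_null_sets null_sets_completionI)
  define z where "z t = (if t \<in> N then 0 else y2 t)" for t
  have "(z has_integral (y1 t - y1 0)) {0..t}" if "t \<in> {0..1}" for t
    using has_integral_spike[OF \<open>negligible N\<close>, of "{0..t}" z y2] H that
    unfolding H2_triple_def z_def by auto
  moreover have "cmod (z t) \<le> K * cmod (y t)" if "t \<in> {0..1}" for t
    using N(1) K that by (auto simp: z_def)
  moreover have "(y has_vector_derivative y1 t) (at t within {0..1})" if "t \<in> {0..1}" for t
    using H that unfolding H2_triple_def by blast
  ultimately show ?thesis
    using zero ode_vanishing_left[of y y1 z K x] ode_vanishing_right[of y y1 z K x] K x by blast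
qed

section \<open>Flows on the honeycomb lattice\<close>

lemma summable_on_finite_support:
  fixes f :: "'a \<Rightarrow> 'b::{topological_comm_monoid_add, t2_space}"
  assumes "finite S" "\<And>x. x \<notin> S \<Longrightarrow> f x = 0"
  shows "f summable_on UNIV"
  using summable_on_cong_neutral[of S UNIV f f] summable_on_finite[OF assms(1)] assms(2) by auto

lemma square_summable_constant_on_infinite:
  fixes f :: "'a \<Rightarrow> complex"
  assumes "(\<lambda>v. (cmod (f v))\<^sup>2) summable_on UNIV" "infinite A" "\<And>v. v \<in> A \<Longrightarrow> f v = c"
  shows "c = 0"
proof (rule ccontr)
  assume "c \<noteq> 0"
  have "(\<lambda>v. (cmod (f v))\<^sup>2) summable_on A" using summable_on_subset_banach[OF assms(1)] by blast
  then have "(\<lambda>_. (cmod c)\<^sup>2) summable_on A"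
    using summable_on_cong[of A "\<lambda>v. (cmod (f v))\<^sup>2" "\<lambda>_. (cmod c)\<^sup>2"] assms(3) by simp
  then show False using infsum_diverge_constant[OF assms(2), of "(cmod c)\<^sup>2"] \<open>c \<noteq> 0\<close> by simp
qed

lemma edges_from_A_vertex: "{e. tail e = ((p, q), True)} = {((p, q), D0), ((p, q), D1), ((p, q), D2)}"
  by (auto simp: tail_def) (metis dir.exhaust prod.collapse)

lemma no_edges_from_B_vertex: "{e. tail e = (c, False)} = {}"
  by (auto simp: tail_def)

lemma no_edges_into_A_vertex: "{e. head e = (c, True)} = {}"
  by (auto simp: head_def)

lemma edges_into_B_vertex: "{e. head e = ((p, q), False)} = {((p, q), D0), ((p + 1, q), D1), ((p, q + 1), D2)}"
proof -
  have "head ((i, j), d) = ((p, q), False) \<longleftrightarrow> ((i, j), d) \<in> {((p, q), D0), ((p + 1, q), D1), ((p, q + 1), D2)}"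
    for i j d by (cases d) (auto simp: head_def)
  then show ?thesis by auto
qed

definition divergence_free :: "(edge \<Rightarrow> 'a::ab_group_add) \<Rightarrow> bool" where
  "divergence_free c \<longleftrightarrow>
     (\<forall>p q. c ((p, q), D0) + c ((p, q), D1) + c ((p, q), D2) = 0) \<and>
     (\<forall>p q. c ((p, q), D0) + c ((p + 1, q), D1) + c ((p, q + 1), D2) = 0)"

lemma divergence_free_zero: "divergence_free (\<lambda>e. 0)"
  by (simp add: divergence_free_def)

lemma divergence_free_add:
  "divergence_free c \<Longrightarrow> divergence_free d \<Longrightarrow> divergence_free (\<lambda>e. c e + d e)"
proof -
  have regroup: "\<And>x y z x' y' z' :: 'a. (x + x') + (y + y') + (z + z') = (x + y + z) + (x' + y' + z')"
    by (simp add: ac_simps)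
  show "divergence_free c \<Longrightarrow> divergence_free d \<Longrightarrow> divergence_free (\<lambda>e. c e + d e)"
    unfolding divergence_free_def by (simp add: regroup)
qed

lemma divergence_free_scale:
  fixes c :: "edge \<Rightarrow> 'a::ring"
  shows "divergence_free c \<Longrightarrow> divergence_free (\<lambda>e. s * c e)"
  unfolding divergence_free_def by (simp flip: distrib_left)

lemma sum3_zero_approx:
  fixes x y z :: "'a::real_normed_vector"
  assumes "\<And>\<delta>. \<delta> > 0 \<Longrightarrow> \<exists>x' y' z'. x' + y' + z' = 0 \<and>
      norm (x - x') < \<delta> \<and> norm (y - y') < \<delta> \<and> norm (z - z') < \<delta>"
  shows "x + y + z = 0"
proof (rule ccontr)
  assume "x + y + z \<noteq> 0"
  then obtain x' y' z' where approx: "x' + y' + z' = 0" "norm (x - x') < norm (x + y + z) / 3"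
    "norm (y - y') < norm (x + y + z) / 3" "norm (z - z') < norm (x + y + z) / 3"
    using assms[of "norm (x + y + z) / 3"] by auto
  have "x + y + z = (x - x') + (y - y') + (z - z')" using approx(1) by (simp add: algebra_simps)
  then have "norm (x + y + z) \<le> norm (x - x') + norm (y - y') + norm (z - z')"
    by (simp only:) (intro order_trans[OF norm_triangle_ineq add_right_mono[OF norm_triangle_ineq]])
  then show False using approx(2-4) by linarith
qed

lemma divergence_free_approx:
  fixes c :: "edge \<Rightarrow> 'a::real_normed_vector"
  assumes "\<And>\<delta>. \<delta> > 0 \<Longrightarrow> \<exists>d. divergence_free d \<and> (\<forall>e. norm (c e - d e) < \<delta>)"
  shows "divergence_free c"
  unfolding divergence_free_def
proof (intro conjI allI)
  fix p q
  show "c ((p, q), D0) + c ((p, q), D1) + c ((p, q), D2) = 0"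
  proof (rule sum3_zero_approx)
    fix \<delta> :: real assume "\<delta> > 0"
    then obtain d where "divergence_free d" "\<forall>e. norm (c e - d e) < \<delta>" using assms by blast
    then show "\<exists>x' y' z'. x' + y' + z' = 0 \<and> norm (c ((p, q), D0) - x') < \<delta> \<and>
        norm (c ((p, q), D1) - y') < \<delta> \<and> norm (c ((p, q), D2) - z') < \<delta>"
      by (intro exI[of _ "d ((p, q), D0)"] exI[of _ "d ((p, q), D1)"] exI[of _ "d ((p, q), D2)"])
        (simp add: divergence_free_def)
  qed
  show "c ((p, q), D0) + c ((p + 1, q), D1) + c ((p, q + 1), D2) = 0"
  proof (rule sum3_zero_approx)
    fix \<delta> :: real assume "\<delta> > 0"
    then obtain d where "divergence_free d" "\<forall>e. norm (c e - d e) < \<delta>" using assms by blast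
    then show "\<exists>x' y' z'. x' + y' + z' = 0 \<and> norm (c ((p, q), D0) - x') < \<delta> \<and>
        norm (c ((p + 1, q), D1) - y') < \<delta> \<and> norm (c ((p, q + 1), D2) - z') < \<delta>"
      by (intro exI[of _ "d ((p, q), D0)"] exI[of _ "d ((p + 1, q), D1)"] exI[of _ "d ((p, q + 1), D2)"])
        (simp add: divergence_free_def)
  qed
qed

lemma vertex_sums_zero_iff_divergence_free:
  fixes c :: "edge \<Rightarrow> 'a::field"
  assumes "\<alpha> \<noteq> 0" "\<beta> \<noteq> 0"
  shows "(\<forall>v. (\<Sum>e\<in>{e. tail e = v}. \<alpha> * c e) + (\<Sum>e\<in>{e. head e = v}. \<beta> * c e) = 0)
    \<longleftrightarrow> divergence_free c" (is "(\<forall>v. ?sum v = 0) \<longleftrightarrow> _")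
proof -
  have A: "?sum ((p, q), True) = \<alpha> * (c ((p, q), D0) + c ((p, q), D1) + c ((p, q), D2))" for p q
    by (simp add: edges_from_A_vertex no_edges_into_A_vertex algebra_simps)
  have B: "?sum ((p, q), False) = \<beta> * (c ((p, q), D0) + c ((p + 1, q), D1) + c ((p, q + 1), D2))" for p q
    by (simp add: edges_into_B_vertex no_edges_from_B_vertex algebra_simps)
  show ?thesis
  proof
    assume zero: "\<forall>v. ?sum v = 0"
    have "c ((p, q), D0) + c ((p, q), D1) + c ((p, q), D2) = 0" for p q
      using zero[rule_format, of "((p, q), True)"] A[of p q] assms by simp
    moreover have "c ((p, q), D0) + c ((p + 1, q), D1) + c ((p, q + 1), D2) = 0" for p q
      using zero[rule_format, of "((p, q), False)"] B[of p q] assms by simp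
    ultimately show "divergence_free c" by (simp add: divergence_free_def)
  next
    assume "divergence_free c"
    then have "?sum ((p, q), b) = 0" for p q b
      using A B by (cases b) (simp_all add: divergence_free_def)
    then show "\<forall>v. ?sum v = 0" by (simp add: split_paired_all)
  qed
qed

text \<open>The two hexagonal faces containing an edge (in the indexing of \<open>hexagon\<close>), so that
  \<open>curl \<psi>\<close> is the flow circulating with strength \<open>\<psi> z\<close> around each face \<open>z\<close>.\<close>

definition adjacent_faces :: "edge \<Rightarrow> (int \<times> int) \<times> (int \<times> int)" where
  "adjacent_faces e = (case e of
      ((p, q), D0) \<Rightarrow> ((p, q), (p - 1, q + 1))
    | ((p, q), D1) \<Rightarrow> ((p - 1, q + 1), (p - 1, q))
    | ((p, q), D2) \<Rightarrow> ((p - 1, q), (p, q)))"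

definition curl :: "(int \<times> int \<Rightarrow> 'a::ab_group_add) \<Rightarrow> edge \<Rightarrow> 'a" where
  "curl \<psi> e = \<psi> (fst (adjacent_faces e)) - \<psi> (snd (adjacent_faces e))"

lemma curl_simps:
  "curl \<psi> ((p, q), D0) = \<psi> (p, q) - \<psi> (p - 1, q + 1)"
  "curl \<psi> ((p, q), D1) = \<psi> (p - 1, q + 1) - \<psi> (p - 1, q)"
  "curl \<psi> ((p, q), D2) = \<psi> (p - 1, q) - \<psi> (p, q)"
  by (simp_all add: curl_def adjacent_faces_def)

lemma divergence_free_curl: "divergence_free (curl \<psi>)"
  by (simp add: divergence_free_def curl_simps)

lemma adjacent_face_hexagon:
  assumes "z = fst (adjacent_faces e) \<or> z = snd (adjacent_faces e)"
  shows "e \<in> hexagon z"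
proof -
  obtain p q d where e: "e = ((p, q), d)" by (metis prod.collapse)
  obtain i j where z: "z = (i, j)" by fastforce
  show ?thesis using assms unfolding e z hexagon_def adjacent_faces_def
    by (cases d) (auto simp: algebra_simps)
qed

lemma finite_hexagon: "finite (hexagon z)"
  by (auto simp: hexagon_def split: prod.splits)

definition hexagon_flow :: "int \<times> int \<Rightarrow> edge \<Rightarrow> complex" where
  "hexagon_flow z = curl (\<lambda>w. if w = z then 1 else 0)"

lemma hexagon_flow_outside: "e \<notin> hexagon z \<Longrightarrow> hexagon_flow z e = 0"
  using adjacent_face_hexagon[of z e] by (auto simp: hexagon_flow_def curl_def)

lemma curl_eq_sum_hexagon_flows:
  assumes "finite S" "\<And>z. z \<notin> S \<Longrightarrow> \<psi> z = 0"
  shows "curl \<psi> e = (\<Sum>z\<in>S. \<psi> z * hexagon_flow z e)"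
proof -
  have "\<psi> z * hexagon_flow z e = (if z = fst (adjacent_faces e) then \<psi> z else 0)
      - (if z = snd (adjacent_faces e) then \<psi> z else 0)" for z
    by (auto simp: hexagon_flow_def curl_def)
  then have "(\<Sum>z\<in>S. \<psi> z * hexagon_flow z e)
      = (\<Sum>z\<in>S. if z = fst (adjacent_faces e) then \<psi> z else 0)
        - (\<Sum>z\<in>S. if z = snd (adjacent_faces e) then \<psi> z else 0)"
    by (simp add: sum_subtractf)
  also have "\<dots> = curl \<psi> e" using assms by (simp add: sum.delta' curl_def)
  finally show ?thesis by simp
qed

lemma hexagon_flow_norm: "(\<Sum>\<^sub>\<infinity>e. hexagon_flow z e * cnj (hexagon_flow z e)) = 6"
proof -
  obtain i j where z: "z = (i, j)" by fastforce
  have "(\<Sum>\<^sub>\<infinity>e. hexagon_flow z e * cnj (hexagon_flow z e))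
      = (\<Sum>e\<in>hexagon z. hexagon_flow z e * cnj (hexagon_flow z e))"
    by (subst infsum_finite[OF finite_hexagon, symmetric], rule infsum_cong_neutral)
      (auto simp: hexagon_flow_outside)
  also have "\<dots> = 6" unfolding z hexagon_def by (simp add: hexagon_flow_def curl_simps)
  finally show ?thesis .
qed

lemma hexagon_flows_orthogonal:
  assumes "hexagon z \<inter> hexagon w = {}"
  shows "(\<Sum>\<^sub>\<infinity>e. hexagon_flow z e * cnj (hexagon_flow w e)) = 0"
  using assms hexagon_flow_outside[of _ z] hexagon_flow_outside[of _ w]
  by (intro infsum_0) (metis IntI empty_iff mult_zero_left mult_zero_right complex_cnj_zero)

definition partial_sum :: "(int \<Rightarrow> 'a::ab_group_add) \<Rightarrow> int \<Rightarrow> 'a" where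
  "partial_sum f i = (if i \<ge> 0 then (\<Sum>k\<in>{1..i}. f k) else - (\<Sum>k\<in>{i + 1..0}. f k))"

lemma partial_sum_0 [simp]: "partial_sum f 0 = 0"
  by (simp add: partial_sum_def)

lemma partial_sum_diff: "partial_sum f i - partial_sum f (i - 1) = f i"
proof (cases "i \<ge> 1")
  case True
  then have "{1..i} = insert i {1..i - 1}" by auto
  with True show ?thesis by (simp add: partial_sum_def)
next
  case False
  then have "{i..0} = insert i {i + 1..0}" by auto
  with False show ?thesis by (auto simp: partial_sum_def)
qed

lemma int_constant_from_steps:
  fixes g :: "int \<Rightarrow> 'a"
  assumes "\<And>i. g i = g (i - 1)"
  shows "g i = g 0"
proof (induction i rule: int_induct[where k = 0])
  case (step1 i) then show ?case using assms[of "i + 1"] by simp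
next
  case (step2 i) then show ?case using assms[of i] by simp
qed simp

lemma divergence_free_imp_curl:
  fixes c :: "edge \<Rightarrow> 'a::ab_group_add"
  assumes "divergence_free c"
  obtains \<psi> where "\<And>e. curl \<psi> e = c e"
proof -
  have A: "\<And>p q. c ((p, q), D0) + c ((p, q), D1) + c ((p, q), D2) = 0"
    and B: "\<And>p q. c ((p, q), D0) + c ((p + 1, q), D1) + c ((p, q + 1), D2) = 0"
    using assms unfolding divergence_free_def by blast+
  txt \<open>The potential is fixed along the column \<open>p = 0\<close> by the \<open>D1\<close> edges and then along
    every row by the \<open>D2\<close> edges; the two vertex conditions give the remaining equations.\<close>
  define V where "V = partial_sum (\<lambda>j. c ((1, j - 1), D1))"
  define H where "H i j = partial_sum (\<lambda>k. c ((k, j), D2)) i" for i j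
  define \<psi> where "\<psi> z = V (snd z) - H (fst z) (snd z)" for z
  have D2: "curl \<psi> ((p, q), D2) = c ((p, q), D2)" for p q
    using partial_sum_diff[of "\<lambda>k. c ((k, q), D2)" p] by (simp add: curl_simps \<psi>_def H_def)
  have D1: "curl \<psi> ((p, q), D1) = c ((p, q), D1)" for p q
  proof -
    define g where "g i = c ((i + 1, q), D1) - c ((1, q), D1) + H i (q + 1) - H i q" for i
    have "g i = g (i - 1)" for i
    proof -
      have "g i - g (i - 1) = c ((i + 1, q), D1) - c ((i, q), D1) + c ((i, q + 1), D2) - c ((i, q), D2)"
        using partial_sum_diff[of "\<lambda>k. c ((k, q + 1), D2)" i] partial_sum_diff[of "\<lambda>k. c ((k, q), D2)" i]
        by (simp add: g_def H_def algebra_simps)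
      also have "\<dots> = (c ((i, q), D0) + c ((i + 1, q), D1) + c ((i, q + 1), D2))
          - (c ((i, q), D0) + c ((i, q), D1) + c ((i, q), D2))"
        by (simp add: algebra_simps)
      also have "\<dots> = 0" using A[of i q] B[of i q] by simp
      finally show ?thesis by simp
    qed
    then have "g (p - 1) = g 0" by (rule int_constant_from_steps)
    moreover have "V (q + 1) - V q = c ((1, q), D1)"
      using partial_sum_diff[of "\<lambda>j. c ((1, j - 1), D1)" "q + 1"] by (simp add: V_def)
    ultimately show ?thesis by (simp add: curl_simps \<psi>_def g_def H_def algebra_simps)
  qed
  have D0: "curl \<psi> ((p, q), D0) = c ((p, q), D0)" for p q
  proof -
    have "curl \<psi> ((p, q), D0) = - (curl \<psi> ((p, q), D1) + curl \<psi> ((p, q), D2))"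
      by (simp add: curl_simps)
    also have "\<dots> = - (c ((p, q), D1) + c ((p, q), D2))" by (simp only: D1 D2)
    also have "\<dots> = c ((p, q), D0)" by (rule minus_unique) (use A[of p q] in \<open>simp add: ac_simps\<close>)
    finally show ?thesis .
  qed
  have "curl \<psi> ((p, q), d) = c ((p, q), d)" for p q d
    using D0 D1 D2 by (cases d) simp_all
  then have "curl \<psi> e = c e" for e by (metis prod.collapse)
  then show ?thesis by (rule that)
qed

section \<open>Approximation of square-summable flows by hexagon flows\<close>

lemma summable_on_norm_sq_lincomb:
  assumes "(\<lambda>e. (cmod (c e))\<^sup>2) summable_on UNIV" "(\<lambda>e. (cmod (d e))\<^sup>2) summable_on UNIV"
  shows "(\<lambda>e. (cmod (\<alpha> * c e + \<beta> * d e))\<^sup>2) summable_on UNIV"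
proof (rule summable_on_comparison_test)
  show "(\<lambda>e. 2 * (cmod \<alpha>)\<^sup>2 * (cmod (c e))\<^sup>2 + 2 * (cmod \<beta>)\<^sup>2 * (cmod (d e))\<^sup>2) summable_on UNIV"
    using assms by (intro summable_on_add summable_on_cmult_right)
qed (simp_all add: norm_lincomb_sq_le)

lemma infsum_tail_small:
  fixes f :: "'a \<Rightarrow> real"
  assumes s: "f summable_on UNIV" and eps: "\<epsilon> > 0"
  shows "\<exists>F. finite F \<and> infsum f (- F) < \<epsilon>"
proof -
  obtain F where F: "finite F" "dist (sum f F) (infsum f UNIV) \<le> \<epsilon> / 2"
    using infsum_finite_approximation[OF s, of "\<epsilon>/2"] eps by auto
  have "infsum f (- F) = infsum f UNIV - infsum f F"
    using infsum_Diff[OF s summable_on_subset_banach[OF s], of F] by (simp add: Compl_eq_Diff_UNIV)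
  also have "infsum f F = sum f F" by (rule infsum_finite[OF F(1)])
  finally have "infsum f (- F) = infsum f UNIV - sum f F" .
  moreover have "\<bar>sum f F - infsum f UNIV\<bar> \<le> \<epsilon> / 2" using F(2) by (simp add: dist_real_def)
  then have "- (sum f F - infsum f UNIV) \<le> \<epsilon> / 2" by (rule abs_le_D2)
  ultimately have "infsum f (- F) \<le> \<epsilon> / 2" by linarith
  then show ?thesis using F(1) eps by (intro exI[of _ F]) auto
qed

text \<open>The cutoff argument below needs a bounded potential; truncating the real and imaginary
  parts is 1-Lipschitz, so it changes the curl only on edges where the potential is large.\<close>

definition clip :: "real \<Rightarrow> real \<Rightarrow> real" where
  "clip M t = max (- M) (min M t)"

definition trunc :: "real \<Rightarrow> complex \<Rightarrow> complex" where
  "trunc M z = Complex (clip M (Re z)) (clip M (Im z))"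

lemma clip_lipschitz: "\<bar>clip M s - clip M t\<bar> \<le> \<bar>s - t\<bar>"
  unfolding clip_def by linarith

lemma trunc_lipschitz: "cmod (trunc M z - trunc M w) \<le> cmod (z - w)"
proof -
  have "(cmod (trunc M z - trunc M w))\<^sup>2
      = (clip M (Re z) - clip M (Re w))\<^sup>2 + (clip M (Im z) - clip M (Im w))\<^sup>2"
    by (simp add: trunc_def cmod_power2)
  also have "\<dots> \<le> (Re z - Re w)\<^sup>2 + (Im z - Im w)\<^sup>2"
    by (intro add_mono clip_lipschitz[THEN abs_le_square_iff[THEN iffD1]])
  also have "\<dots> = (cmod (z - w))\<^sup>2" by (simp add: cmod_power2)
  finally show ?thesis by (rule power2_le_imp_le) simp
qed

lemma trunc_id:
  assumes "cmod z \<le> M"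
  shows "trunc M z = z"
proof -
  have "\<bar>Re z\<bar> \<le> M" "\<bar>Im z\<bar> \<le> M" using abs_Re_le_cmod[of z] abs_Im_le_cmod[of z] assms by linarith+
  then show ?thesis by (simp add: trunc_def clip_def complex_eq_iff)
qed

lemma trunc_bound:
  assumes "M \<ge> 0"
  shows "cmod (trunc M z) \<le> 2 * M"
proof -
  have "\<bar>clip M t\<bar> \<le> M" for t unfolding clip_def using assms by linarith
  then show ?thesis using cmod_le[of "trunc M z"] by (simp add: trunc_def) (smt (verit))
qed

lemma curl_minus_trunc_bound: "cmod (curl (\<lambda>z. \<psi> z - trunc M (\<psi> z)) e) \<le> 2 * cmod (curl \<psi> e)"
proof -
  define z1 z2 where "z1 = fst (adjacent_faces e)" and "z2 = snd (adjacent_faces e)"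
  have "curl (\<lambda>z. \<psi> z - trunc M (\<psi> z)) e = curl \<psi> e - (trunc M (\<psi> z1) - trunc M (\<psi> z2))"
    by (simp add: curl_def z1_def z2_def algebra_simps)
  also have "cmod \<dots> \<le> cmod (curl \<psi> e) + cmod (trunc M (\<psi> z1) - trunc M (\<psi> z2))"
    by (rule norm_triangle_ineq4)
  also have "\<dots> \<le> 2 * cmod (curl \<psi> e)"
    using trunc_lipschitz[of M "\<psi> z1" "\<psi> z2"] by (simp add: curl_def z1_def z2_def)
  finally show ?thesis .
qed

lemma curl_truncation_small:
  assumes summable: "(\<lambda>e. (cmod (curl \<psi> e))\<^sup>2) summable_on UNIV" and "\<epsilon> > 0"
  obtains M where "M > 0"
    "(\<lambda>e. (cmod (curl (\<lambda>z. \<psi> z - trunc M (\<psi> z)) e))\<^sup>2) summable_on UNIV"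
    "(\<Sum>\<^sub>\<infinity>e. (cmod (curl (\<lambda>z. \<psi> z - trunc M (\<psi> z)) e))\<^sup>2) < \<epsilon>"
proof -
  have summable4: "(\<lambda>e. 4 * (cmod (curl \<psi> e))\<^sup>2) summable_on UNIV"
    using summable by (rule summable_on_cmult_right)
  obtain F where "finite F" and tail: "(\<Sum>\<^sub>\<infinity>e\<in>-F. 4 * (cmod (curl \<psi> e))\<^sup>2) < \<epsilon>"
    using infsum_tail_small[OF summable4 \<open>\<epsilon> > 0\<close>] by auto
  define faces where "faces = fst ` adjacent_faces ` F \<union> snd ` adjacent_faces ` F"
  define M where "M = 1 + (\<Sum>z\<in>faces. cmod (\<psi> z))"
  have "finite faces" using \<open>finite F\<close> by (simp add: faces_def)
  have "M > 0" unfolding M_def by (simp add: add_pos_nonneg sum_nonneg)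
  have "cmod (\<psi> z) \<le> M" if "z \<in> faces" for z
    using member_le_sum[OF that _ \<open>finite faces\<close>, of "\<lambda>z. cmod (\<psi> z)"] by (simp add: M_def)
  then have vanish: "curl (\<lambda>z. \<psi> z - trunc M (\<psi> z)) e = 0" if "e \<in> F" for e
    using that by (simp add: curl_def trunc_id faces_def)
  define g where "g e = (cmod (curl (\<lambda>z. \<psi> z - trunc M (\<psi> z)) e))\<^sup>2" for e
  have g_le: "g e \<le> 4 * (cmod (curl \<psi> e))\<^sup>2" for e
    using power_mono[OF curl_minus_trunc_bound[of \<psi> M e], of 2] by (simp add: g_def power_mult_distrib)
  have g_sum: "g summable_on UNIV"
    by (rule summable_on_comparison_test[OF summable4]) (use g_le in \<open>simp_all add: g_def\<close>)
  have "infsum g UNIV = infsum g (- F)" by (rule infsum_cong_neutral) (auto simp: g_def vanish)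
  also have "\<dots> \<le> (\<Sum>\<^sub>\<infinity>e\<in>-F. 4 * (cmod (curl \<psi> e))\<^sup>2)"
    using g_le by (intro infsum_mono summable_on_subset_banach[OF g_sum] summable_on_subset_banach[OF summable4]) auto
  finally have "infsum g UNIV < \<epsilon>" using tail by simp
  then show ?thesis using that \<open>M > 0\<close> g_sum unfolding g_def by blast
qed

definition cell_radius :: "int \<times> int \<Rightarrow> nat" where
  "cell_radius z = nat (max \<bar>fst z\<bar> \<bar>snd z\<bar>)"

lemma cell_radius_neighbour:
  "\<bar>fst z - fst w\<bar> \<le> 1 \<Longrightarrow> \<bar>snd z - snd w\<bar> \<le> 1 \<Longrightarrow> cell_radius z \<le> cell_radius w + 1"
  unfolding cell_radius_def by (cases z, cases w) (simp, arith)

lemma adjacent_faces_near: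
  fixes p q :: int
  shows "\<bar>fst (fst (adjacent_faces ((p,q),d))) - p\<bar> \<le> 1 \<and> \<bar>snd (fst (adjacent_faces ((p,q),d))) - q\<bar> \<le> 1 \<and>
         \<bar>fst (snd (adjacent_faces ((p,q),d))) - p\<bar> \<le> 1 \<and> \<bar>snd (snd (adjacent_faces ((p,q),d))) - q\<bar> \<le> 1 \<and>
         \<bar>fst (fst (adjacent_faces ((p,q),d))) - fst (snd (adjacent_faces ((p,q),d)))\<bar> \<le> 1 \<and>
         \<bar>snd (fst (adjacent_faces ((p,q),d))) - snd (snd (adjacent_faces ((p,q),d)))\<bar> \<le> 1"
  by (cases d) (auto simp: adjacent_faces_def)

lemma adjacent_faces_cell_radius:
  fixes e :: edge
  defines "r1 \<equiv> cell_radius (fst (adjacent_faces e))" and "r2 \<equiv> cell_radius (snd (adjacent_faces e))"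
    and "r \<equiv> cell_radius (fst e)"
  shows "r1 \<le> r2 + 1" "r2 \<le> r1 + 1" "r \<le> r1 + 1" "r \<le> r2 + 1"
proof -
  obtain p q d where e: "e = ((p,q),d)" by (metis prod.collapse)
  note n = adjacent_faces_near[of p q d]
  show "r1 \<le> r2 + 1" unfolding r1_def r2_def e by (rule cell_radius_neighbour) (use n in auto)
  show "r2 \<le> r1 + 1" unfolding r1_def r2_def e
    by (rule cell_radius_neighbour) (use n in \<open>auto simp: abs_minus_commute\<close>)
  show "r \<le> r1 + 1" unfolding r1_def r_def e
    by (rule cell_radius_neighbour) (use n in \<open>auto simp: abs_minus_commute\<close>)
  show "r \<le> r2 + 1" unfolding r2_def r_def e
    by (rule cell_radius_neighbour) (use n in \<open>auto simp: abs_minus_commute\<close>)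
qed

lemma card_2_le: "card {x, y} \<le> 2"
  by (simp add: card_insert_if)

lemma card_cell_radius_sphere:
  "finite {z. cell_radius z = r} \<and> card {z. cell_radius z = r} \<le> 8 * r + 4"
proof -
  define A where "A = ({int r, - int r} \<times> {- int r..int r})"
  define B where "B = ({- int r..int r} \<times> {int r, - int r})"
  have sub: "{z::int\<times>int. cell_radius z = r} \<subseteq> A \<union> B"
  proof
    fix z :: "int \<times> int" assume "z \<in> {z. cell_radius z = r}"
    then have h: "nat (max \<bar>fst z\<bar> \<bar>snd z\<bar>) = r" by (simp add: cell_radius_def)
    obtain p q where z: "z = (p,q)" by fastforce
    have m: "max \<bar>p\<bar> \<bar>q\<bar> = int r" using h unfolding z by simp
    have "(\<bar>p\<bar> = int r \<and> \<bar>q\<bar> \<le> int r) \<or> (\<bar>q\<bar> = int r \<and> \<bar>p\<bar> \<le> int r)"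
      using m by (simp add: max_def split: if_splits)
    then show "z \<in> A \<union> B"
    proof
      assume a: "\<bar>p\<bar> = int r \<and> \<bar>q\<bar> \<le> int r"
      then have "p \<in> {int r, - int r}" "q \<in> {- int r..int r}" by (auto simp: abs_if split: if_splits)
      then show ?thesis unfolding z A_def by blast
    next
      assume a: "\<bar>q\<bar> = int r \<and> \<bar>p\<bar> \<le> int r"
      then have "q \<in> {int r, - int r}" "p \<in> {- int r..int r}" by (auto simp: abs_if split: if_splits)
      then show ?thesis unfolding z B_def by blast
    qed
  qed
  have fA: "finite A" "finite B" by (simp_all add: A_def B_def)
  have cA: "card A \<le> 2 * (2 * r + 1)"
  proof -
    have "card A = card {int r, - int r} * card {- int r..int r}"
      unfolding A_def by (rule card_cartesian_product)
    also have "card {int r, - int r} \<le> 2" by (rule card_2_le)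
    then have "card {int r, - int r} * card {- int r..int r} \<le> 2 * card {- int r..int r}" by simp
    also have "card {- int r..int r} = 2 * r + 1" by simp
    finally show ?thesis .
  qed
  have cB: "card B \<le> 2 * (2 * r + 1)"
  proof -
    have "card B = card {- int r..int r} * card {int r, - int r}"
      unfolding B_def by (rule card_cartesian_product)
    also have "card {int r, - int r} \<le> 2" by (rule card_2_le)
    then have "card {- int r..int r} * card {int r, - int r} \<le> card {- int r..int r} * 2" by simp
    also have "card {- int r..int r} = 2 * r + 1" by simp
    finally show ?thesis by simp
  qed
  have "card {z::int\<times>int. cell_radius z = r} \<le> card (A \<union> B)" by (rule card_mono) (use fA sub in auto)
  also have "\<dots> \<le> card A + card B" by (rule card_Un_le)
  also have "card A + card B \<le> 8 * r + 4" using cA cB by simp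
  finally have "card {z::int\<times>int. cell_radius z = r} \<le> 8 * r + 4" .
  moreover have "finite {z::int\<times>int. cell_radius z = r}" by (rule finite_subset[OF sub]) (use fA in auto)
  ultimately show ?thesis by blast
qed

lemma finite_cell_radius_ball: "finite {z::int\<times>int. cell_radius z \<le> L}"
proof (rule finite_subset)
  show "{z::int\<times>int. cell_radius z \<le> L} \<subseteq> {- int L..int L} \<times> {- int L..int L}"
    by (auto simp: cell_radius_def)
qed simp

lemma UNIV_dir: "(UNIV :: dir set) = {D0, D1, D2}"
  using dir.exhaust by auto

lemma finite_dir: "finite (UNIV :: dir set)"
  by (simp add: UNIV_dir)

lemma card_dir: "card (UNIV :: dir set) = 3"
  by (simp add: UNIV_dir)

definition clamp01 :: "real \<Rightarrow> real" where "clamp01 t = max 0 (min 1 t)"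

lemma clamp01_lipschitz: "\<bar>clamp01 s - clamp01 t\<bar> \<le> \<bar>s - t\<bar>"
  unfolding clamp01_def by linarith

lemma clamp01_range: "0 \<le> clamp01 t" "clamp01 t \<le> 1"
  unfolding clamp01_def by linarith+

definition harmonic_gap :: "nat \<Rightarrow> nat \<Rightarrow> real" where
  "harmonic_gap R L = harm L - harm R"

text \<open>Since the sphere of radius \<open>n\<close> has \<open>O(n)\<close> cells and the profile
  drops by \<open>1 / ((n + 1) (H\<^sub>L - H\<^sub>R))\<close> there, the energy of the curl is
  \<open>O(H\<^sub>L / (H\<^sub>L - H\<^sub>R)\<^sup>2)\<close>, which tends to 0 as \<open>L \<rightarrow> \<infinity>\<close>.\<close>

definition harmonic_profile :: "nat \<Rightarrow> nat \<Rightarrow> nat \<Rightarrow> real" where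
  "harmonic_profile R L n = clamp01 ((harm L - harm n) / harmonic_gap R L)"

definition harmonic_cutoff :: "nat \<Rightarrow> nat \<Rightarrow> int \<times> int \<Rightarrow> real" where
  "harmonic_cutoff R L z = harmonic_profile R L (cell_radius z)"

context
  fixes R L :: nat
  assumes RL: "R < L"
begin

abbreviation \<Delta> where "\<Delta> \<equiv> harmonic_gap R L"

lemma harmonic_gap_pos: "\<Delta> > 0"
proof -
  have "harm (Suc R) \<le> (harm L :: real)" using RL by (intro harm_mono) simp
  moreover have "harm (Suc R) > (harm R :: real)" by (simp add: harm_Suc)
  ultimately show ?thesis unfolding harmonic_gap_def by simp
qed

lemma harmonic_profile_inner: "n \<le> R \<Longrightarrow> harmonic_profile R L n = 1"
proof -
  assume "n \<le> R"
  then have "harm n \<le> (harm R :: real)" by (rule harm_mono)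
  then have "(harm L - harm n) / (harm L - harm R) \<ge> (1::real)"
    using harmonic_gap_pos unfolding harmonic_gap_def by (simp add: field_simps)
  then show ?thesis unfolding harmonic_profile_def clamp01_def harmonic_gap_def by simp
qed

lemma harmonic_profile_outer: "L \<le> n \<Longrightarrow> harmonic_profile R L n = 0"
proof -
  assume "L \<le> n"
  then have "harm L \<le> (harm n :: real)" by (rule harm_mono)
  then have "(harm L - harm n) / (harm L - harm R) \<le> (0::real)"
    using harmonic_gap_pos unfolding harmonic_gap_def by (simp add: divide_nonpos_pos)
  then show ?thesis unfolding harmonic_profile_def clamp01_def harmonic_gap_def by simp
qed

lemma harmonic_profile_range: "0 \<le> harmonic_profile R L n" "harmonic_profile R L n \<le> 1"
  unfolding harmonic_profile_def by (rule clamp01_range)+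

lemma harmonic_profile_step:
  "\<bar>harmonic_profile R L n - harmonic_profile R L (Suc n)\<bar> \<le> 1 / ((real n + 1) * \<Delta>)"
proof -
  have "\<bar>harmonic_profile R L n - harmonic_profile R L (Suc n)\<bar>
      \<le> \<bar>(harm L - harm n) / \<Delta> - (harm L - harm (Suc n)) / \<Delta>\<bar>"
    unfolding harmonic_profile_def harmonic_gap_def by (rule clamp01_lipschitz)
  also have "(harm L - harm n) / \<Delta> - (harm L - harm (Suc n)) / \<Delta> = (harm (Suc n) - harm n) / \<Delta>"
    by (simp add: diff_divide_distrib)
  also have "harm (Suc n) - harm n = (1 / (real n + 1) :: real)" by (simp add: harm_Suc inverse_eq_divide)
  finally show ?thesis using harmonic_gap_pos by (simp add: abs_div_pos)
qed

lemma harmonic_profile_near: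
  assumes "r1 \<le> r2 + 1" "r2 \<le> r1 + 1"
  shows "\<bar>harmonic_profile R L r1 - harmonic_profile R L r2\<bar> \<le> 1 / ((real (min r1 r2) + 1) * \<Delta>)"
proof -
  consider "r1 = r2" | "r2 = Suc r1" | "r1 = Suc r2" using assms by linarith
  then show ?thesis
  proof cases
    case 1 then show ?thesis using harmonic_gap_pos by simp
  next
    case 2 then show ?thesis using harmonic_profile_step[of r1] by simp
  next
    case 3 then show ?thesis using harmonic_profile_step[of r2] by (simp add: abs_minus_commute)
  qed
qed

lemma curl_harmonic_cutoff_sq_le:
  "(curl (harmonic_cutoff R L) e)\<^sup>2
    \<le> (if cell_radius (fst e) \<le> L then 4 / ((real (cell_radius (fst e)) + 1)\<^sup>2 * \<Delta>\<^sup>2) else 0)"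
proof -
  define r1 where "r1 = cell_radius (fst (adjacent_faces e))"
  define r2 where "r2 = cell_radius (snd (adjacent_faces e))"
  define r where "r = cell_radius (fst e)"
  have h: "r1 \<le> r2 + 1" "r2 \<le> r1 + 1" "r \<le> r1 + 1" "r \<le> r2 + 1"
    using adjacent_faces_cell_radius[of e] unfolding r1_def r2_def r_def by auto
  have D: "curl (harmonic_cutoff R L) e = harmonic_profile R L r1 - harmonic_profile R L r2"
    by (simp add: curl_def harmonic_cutoff_def r1_def r2_def)
  show ?thesis
  proof (cases "r \<le> L")
    case True
    have mm: "r \<le> min r1 r2 + 1" using h by (simp add: min_def)
    then have "real r \<le> real (min r1 r2) + 1" by (metis of_nat_1 of_nat_add of_nat_le_iff)
    then have m: "real r + 1 \<le> 2 * (real (min r1 r2) + 1)" by simp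
    have x: "0 < (real (min r1 r2) + 1) * \<Delta>" and y: "0 < (real r + 1) * \<Delta>" using harmonic_gap_pos by simp_all
    have yx: "(real r + 1) * \<Delta> \<le> 2 * ((real (min r1 r2) + 1) * \<Delta>)"
      using mult_right_mono[OF m less_imp_le[OF harmonic_gap_pos]] by (simp add: algebra_simps)
    have "\<bar>curl (harmonic_cutoff R L) e\<bar> \<le> 1 / ((real (min r1 r2) + 1) * \<Delta>)"
      unfolding D by (rule harmonic_profile_near[OF h(1,2)])
    also have "\<dots> = 2 / (2 * ((real (min r1 r2) + 1) * \<Delta>))" by simp
    also have "\<dots> \<le> 2 / ((real r + 1) * \<Delta>)"
      by (rule divide_left_mono[OF yx]) (use x y in auto)
    finally have b: "\<bar>curl (harmonic_cutoff R L) e\<bar> \<le> 2 / ((real r + 1) * \<Delta>)" .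
    have "(curl (harmonic_cutoff R L) e)\<^sup>2 \<le> (2 / ((real r + 1) * \<Delta>))\<^sup>2"
      using b by (metis abs_ge_zero order_trans power2_abs power_mono)
    also have "\<dots> = 4 / ((real r + 1)\<^sup>2 * \<Delta>\<^sup>2)" by (simp add: power_divide power_mult_distrib)
    finally show ?thesis using True by (simp add: r_def)
  next
    case False
    then have "L \<le> r1" "L \<le> r2" using h by linarith+
    then have "curl (harmonic_cutoff R L) e = 0" unfolding D using harmonic_profile_outer by simp
    then show ?thesis using False by (simp add: r_def)
  qed
qed

lemma finite_support_harmonic_cutoff: "finite {z. harmonic_cutoff R L z \<noteq> 0}"
proof (rule finite_subset[OF _ finite_cell_radius_ball[of L]])
  show "{z. harmonic_cutoff R L z \<noteq> 0} \<subseteq> {z. cell_radius z \<le> L}"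
  proof
    fix z assume "z \<in> {z. harmonic_cutoff R L z \<noteq> 0}"
    then have "\<not> L \<le> cell_radius z" using harmonic_profile_outer by (auto simp: harmonic_cutoff_def)
    then show "z \<in> {z. cell_radius z \<le> L}" by simp
  qed
qed

lemma harmonic_cutoff_energy:
  "(\<lambda>e. (curl (harmonic_cutoff R L) e)\<^sup>2) summable_on UNIV"
  "(\<Sum>\<^sub>\<infinity>e. (curl (harmonic_cutoff R L) e)\<^sup>2) \<le> 96 * harm (Suc L) / \<Delta>\<^sup>2"
proof -
  define E where "E = {z. cell_radius z \<le> L} \<times> (UNIV :: dir set)"
  define V where "V r = 4 / ((real r + 1)\<^sup>2 * \<Delta>\<^sup>2)" for r :: nat
  have "finite E" unfolding E_def using finite_cell_radius_ball finite_dir by simp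
  have outside: "curl (harmonic_cutoff R L) e = 0" if "e \<notin> E" for e
    using that curl_harmonic_cutoff_sq_le[of e] by (cases e) (auto simp: E_def)
  show "(\<lambda>e. (curl (harmonic_cutoff R L) e)\<^sup>2) summable_on UNIV"
    by (rule summable_on_finite_support[OF \<open>finite E\<close>]) (simp add: outside)
  have "(\<Sum>\<^sub>\<infinity>e. (curl (harmonic_cutoff R L) e)\<^sup>2) = (\<Sum>e\<in>E. (curl (harmonic_cutoff R L) e)\<^sup>2)"
    by (subst infsum_finite[OF \<open>finite E\<close>, symmetric], rule infsum_cong_neutral) (auto simp: outside)
  also have "\<dots> \<le> (\<Sum>e\<in>E. V (cell_radius (fst e)))"
  proof (rule sum_mono)
    fix e assume "e \<in> E"
    then show "(curl (harmonic_cutoff R L) e)\<^sup>2 \<le> V (cell_radius (fst e))"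
      using curl_harmonic_cutoff_sq_le[of e] by (cases e) (auto simp: E_def V_def)
  qed
  also have "\<dots> = (\<Sum>z\<in>{z. cell_radius z \<le> L}. \<Sum>d\<in>(UNIV :: dir set). V (cell_radius z))"
    unfolding E_def by (simp only: sum.cartesian_product split_def)
  also have "\<dots> = 3 * (\<Sum>z\<in>{z. cell_radius z \<le> L}. V (cell_radius z))"
    by (simp add: card_dir sum_distrib_left)
  also have "(\<Sum>z\<in>{z. cell_radius z \<le> L}. V (cell_radius z))
      = (\<Sum>r\<in>{..L}. \<Sum>z\<in>{z \<in> {z. cell_radius z \<le> L}. cell_radius z = r}. V (cell_radius z))"
    by (rule sum.group[symmetric]) (auto simp: finite_cell_radius_ball)
  also have "\<dots> \<le> (\<Sum>r\<in>{..L}. 32 / ((real r + 1) * \<Delta>\<^sup>2))"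
  proof (rule sum_mono)
    fix r assume "r \<in> {..L}"
    then have "{z \<in> {z. cell_radius z \<le> L}. cell_radius z = r} = {z. cell_radius z = r}" by auto
    then have "(\<Sum>z\<in>{z \<in> {z. cell_radius z \<le> L}. cell_radius z = r}. V (cell_radius z))
        = real (card {z. cell_radius z = r}) * V r"
      by simp
    also have "\<dots> \<le> (8 * (real r + 1)) * V r"
      using card_cell_radius_sphere[of r] by (intro mult_right_mono) (auto simp: V_def)
    also have "\<dots> = ((real r + 1) * 32) / ((real r + 1) * ((real r + 1) * \<Delta>\<^sup>2))"
      by (simp add: V_def power2_eq_square algebra_simps)
    also have "\<dots> = 32 / ((real r + 1) * \<Delta>\<^sup>2)"
      by (rule mult_divide_mult_cancel_left) simp
    finally show "(\<Sum>z\<in>{z \<in> {z. cell_radius z \<le> L}. cell_radius z = r}. V (cell_radius z))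
        \<le> 32 / ((real r + 1) * \<Delta>\<^sup>2)" .
  qed
  also have "(\<Sum>r\<in>{..L}. 32 / ((real r + 1) * \<Delta>\<^sup>2))
      = 32 / \<Delta>\<^sup>2 * (\<Sum>r\<in>{..L}. 1 / (real r + 1))"
    unfolding sum_distrib_left by (rule sum.cong) simp_all
  also have "(\<Sum>r\<in>{..L}. 1 / (real r + 1)) = harm (Suc L)"
    by (simp add: harm_altdef lessThan_Suc_atMost inverse_eq_divide add.commute)
  finally show "(\<Sum>\<^sub>\<infinity>e. (curl (harmonic_cutoff R L) e)\<^sup>2) \<le> 96 * harm (Suc L) / \<Delta>\<^sup>2"
    by (simp add: field_simps)
qed

end

lemma small_energy_cutoff:
  assumes "finite S" and "\<delta> > 0"
  obtains \<eta> :: "int \<times> int \<Rightarrow> real"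
  where "\<And>z. 0 \<le> \<eta> z \<and> \<eta> z \<le> 1" "\<And>z. z \<in> S \<Longrightarrow> \<eta> z = 1" "finite {z. \<eta> z \<noteq> 0}"
    "(\<lambda>e. (curl \<eta> e)\<^sup>2) summable_on UNIV" "(\<Sum>\<^sub>\<infinity>e. (curl \<eta> e)\<^sup>2) < \<delta>"
proof -
  define R where "R = (\<Sum>z\<in>S. cell_radius z)"
  have inner: "cell_radius z \<le> R" if "z \<in> S" for z
    unfolding R_def by (rule member_le_sum[OF that _ \<open>finite S\<close>]) auto
  obtain N where N: "\<And>n. n \<ge> N \<Longrightarrow> harm n \<ge> (2 * harm R + 2 + 192 / \<delta> :: real)"
    using harm_at_top filterlim_at_top by (metis eventually_sequentially)
  define L where "L = max N (Suc R)"
  have "R < L" by (simp add: L_def)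
  define \<Delta> where "\<Delta> = harmonic_gap R L"
  have "\<Delta> > 0" using harmonic_gap_pos[OF \<open>R < L\<close>] by (simp add: \<Delta>_def)
  have "harm R \<ge> (0::real)" by (rule harm_nonneg)
  then have gap_large: "\<Delta> \<ge> harm R + 1" "\<Delta> > 192 / \<delta>"
    using N[of L] \<open>\<delta> > 0\<close> unfolding \<Delta>_def harmonic_gap_def L_def by (smt (verit) max.cobounded1 divide_pos_pos)+
  have "harm (Suc L) \<le> harm L + (1::real)" by (simp add: harm_Suc inverse_le_1_iff)
  then have "harm (Suc L) \<le> 2 * \<Delta>" using gap_large(1) by (simp add: \<Delta>_def harmonic_gap_def)
  then have "(\<Sum>\<^sub>\<infinity>e. (curl (harmonic_cutoff R L) e)\<^sup>2) \<le> 96 * (2 * \<Delta>) / \<Delta>\<^sup>2"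
    using harmonic_cutoff_energy(2)[OF \<open>R < L\<close>] \<open>\<Delta> > 0\<close> unfolding \<Delta>_def[symmetric]
    by (smt (verit) divide_right_mono zero_le_power2)
  also have "\<dots> = 192 / \<Delta>" using \<open>\<Delta> > 0\<close> by (simp add: power2_eq_square)
  also have "\<dots> < \<delta>" using gap_large(2) \<open>\<Delta> > 0\<close> \<open>\<delta> > 0\<close> by (simp add: field_simps)
  finally show ?thesis
    using that[of "harmonic_cutoff R L"] harmonic_profile_range[OF \<open>R < L\<close>]
      harmonic_profile_inner[OF \<open>R < L\<close>] inner finite_support_harmonic_cutoff[OF \<open>R < L\<close>]
      harmonic_cutoff_energy(1)[OF \<open>R < L\<close>]
    by (simp add: harmonic_cutoff_def)
qed

lemma infsum_norm_sq_add_le: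
  fixes f g :: "'a \<Rightarrow> complex"
  assumes "(\<lambda>x. (cmod (f x))\<^sup>2) summable_on UNIV" "(\<lambda>x. (cmod (g x))\<^sup>2) summable_on UNIV"
  shows "(\<lambda>x. (cmod (f x + g x))\<^sup>2) summable_on UNIV"
    and "(\<Sum>\<^sub>\<infinity>x. (cmod (f x + g x))\<^sup>2)
      \<le> 2 * (\<Sum>\<^sub>\<infinity>x. (cmod (f x))\<^sup>2) + 2 * (\<Sum>\<^sub>\<infinity>x. (cmod (g x))\<^sup>2)"
proof -
  have bound: "(cmod (f x + g x))\<^sup>2 \<le> 2 * (cmod (f x))\<^sup>2 + 2 * (cmod (g x))\<^sup>2" for x
    using norm_lincomb_sq_le[of 1 "f x" 1 "g x"] by simp
  have sum: "(\<lambda>x. 2 * (cmod (f x))\<^sup>2 + 2 * (cmod (g x))\<^sup>2) summable_on UNIV"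
    using assms by (intro summable_on_add summable_on_cmult_right)
  show summable: "(\<lambda>x. (cmod (f x + g x))\<^sup>2) summable_on UNIV"
    by (rule summable_on_comparison_test[OF sum]) (use bound in auto)
  have "(\<Sum>\<^sub>\<infinity>x. (cmod (f x + g x))\<^sup>2)
      \<le> (\<Sum>\<^sub>\<infinity>x. 2 * (cmod (f x))\<^sup>2 + 2 * (cmod (g x))\<^sup>2)"
    by (rule infsum_mono[OF summable sum]) (use bound in auto)
  also have "\<dots> = 2 * (\<Sum>\<^sub>\<infinity>x. (cmod (f x))\<^sup>2) + 2 * (\<Sum>\<^sub>\<infinity>x. (cmod (g x))\<^sup>2)"
    using assms by (simp add: infsum_add summable_on_cmult_right infsum_cmult_right')
  finally show "(\<Sum>\<^sub>\<infinity>x. (cmod (f x + g x))\<^sup>2)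
      \<le> 2 * (\<Sum>\<^sub>\<infinity>x. (cmod (f x))\<^sup>2) + 2 * (\<Sum>\<^sub>\<infinity>x. (cmod (g x))\<^sup>2)" .
qed

lemma curl_cutoff_small:
  fixes \<psi> :: "int \<times> int \<Rightarrow> complex"
  assumes bound: "\<And>z. cmod (\<psi> z) \<le> M"
    and summable: "(\<lambda>e. (cmod (curl \<psi> e))\<^sup>2) summable_on UNIV" and "\<epsilon> > 0"
  obtains \<eta> :: "int \<times> int \<Rightarrow> real" where "finite {z. \<eta> z \<noteq> 0}"
    "(\<lambda>e. (cmod (curl (\<lambda>z. \<psi> z - of_real (\<eta> z) * \<psi> z) e))\<^sup>2) summable_on UNIV"
    "(\<Sum>\<^sub>\<infinity>e. (cmod (curl (\<lambda>z. \<psi> z - of_real (\<eta> z) * \<psi> z) e))\<^sup>2) < \<epsilon>"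
proof -
  obtain F where "finite F" and tail: "(\<Sum>\<^sub>\<infinity>e\<in>-F. (cmod (curl \<psi> e))\<^sup>2) < \<epsilon> / 4"
    using infsum_tail_small[OF summable, of "\<epsilon> / 4"] \<open>\<epsilon> > 0\<close> by auto
  define \<delta> where "\<delta> = \<epsilon> / (4 * (M\<^sup>2 + 1))"
  have "\<delta> > 0" using \<open>\<epsilon> > 0\<close> unfolding \<delta>_def by (intro divide_pos_pos mult_pos_pos add_nonneg_pos) auto
  obtain \<eta> :: "int \<times> int \<Rightarrow> real" where \<eta>: "\<And>z. 0 \<le> \<eta> z \<and> \<eta> z \<le> 1"
    "\<And>z. z \<in> fst ` adjacent_faces ` F \<Longrightarrow> \<eta> z = 1" "finite {z. \<eta> z \<noteq> 0}"
    "(\<lambda>e. (curl \<eta> e)\<^sup>2) summable_on UNIV" "(\<Sum>\<^sub>\<infinity>e. (curl \<eta> e)\<^sup>2) < \<delta>"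
    using small_energy_cutoff[OF _ \<open>\<delta> > 0\<close>, of "fst ` adjacent_faces ` F"] \<open>finite F\<close> by blast
  define u where "u e = of_real (1 - \<eta> (fst (adjacent_faces e))) * curl \<psi> e" for e
  define v where "v e = - (\<psi> (snd (adjacent_faces e)) * of_real (curl \<eta> e))" for e
  have split: "curl (\<lambda>z. \<psi> z - of_real (\<eta> z) * \<psi> z) e = u e + v e" for e
    by (simp add: u_def v_def curl_def algebra_simps)
  have u_le: "(cmod (u e))\<^sup>2 \<le> (if e \<in> F then 0 else (cmod (curl \<psi> e))\<^sup>2)" for e
  proof -
    have "(cmod (u e))\<^sup>2 = (1 - \<eta> (fst (adjacent_faces e)))\<^sup>2 * (cmod (curl \<psi> e))\<^sup>2"
      by (simp add: u_def norm_mult power_mult_distrib del: of_real_diff)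
    moreover have "(1 - \<eta> (fst (adjacent_faces e)))\<^sup>2 \<le> 1" using \<eta>(1) by (simp add: abs_square_le_1)
    ultimately show ?thesis
      using \<eta>(2)[of "fst (adjacent_faces e)"] by (auto intro: mult_left_le_one_le)
  qed
  have v_le: "(cmod (v e))\<^sup>2 \<le> M\<^sup>2 * (curl \<eta> e)\<^sup>2" for e
    using bound[of "snd (adjacent_faces e)"] norm_ge_zero[of "\<psi> (snd (adjacent_faces e))"]
    by (auto simp: v_def norm_mult power_mult_distrib intro!: mult_right_mono power_mono)
  define w where "w e = (if e \<in> F then 0 else (cmod (curl \<psi> e))\<^sup>2)" for e
  have w_sum: "w summable_on UNIV"
    by (rule summable_on_comparison_test[OF summable]) (auto simp: w_def)
  have "infsum w UNIV = (\<Sum>\<^sub>\<infinity>e\<in>-F. (cmod (curl \<psi> e))\<^sup>2)"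
    by (rule infsum_cong_neutral) (auto simp: w_def)
  then have w_small: "infsum w UNIV < \<epsilon> / 4" using tail by simp
  have u_sum: "(\<lambda>e. (cmod (u e))\<^sup>2) summable_on UNIV"
    by (rule summable_on_comparison_test[OF w_sum]) (use u_le in \<open>auto simp: w_def\<close>)
  have "(\<Sum>\<^sub>\<infinity>e. (cmod (u e))\<^sup>2) \<le> infsum w UNIV"
    by (rule infsum_mono[OF u_sum w_sum]) (use u_le in \<open>auto simp: w_def\<close>)
  with w_small have u_small: "(\<Sum>\<^sub>\<infinity>e. (cmod (u e))\<^sup>2) < \<epsilon> / 4" by simp
  have energy_sum: "(\<lambda>e. M\<^sup>2 * (curl \<eta> e)\<^sup>2) summable_on UNIV"
    using \<eta>(4) by (rule summable_on_cmult_right)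
  have v_sum: "(\<lambda>e. (cmod (v e))\<^sup>2) summable_on UNIV"
    by (rule summable_on_comparison_test[OF energy_sum]) (use v_le in auto)
  have "(\<Sum>\<^sub>\<infinity>e. (cmod (v e))\<^sup>2) \<le> M\<^sup>2 * (\<Sum>\<^sub>\<infinity>e. (curl \<eta> e)\<^sup>2)"
    using infsum_mono[OF v_sum energy_sum] v_le by (simp add: infsum_cmult_right')
  also have "\<dots> \<le> M\<^sup>2 * \<delta>" using \<eta>(5) by (intro mult_left_mono) auto
  also have "\<dots> < \<epsilon> / 4"
    using \<open>\<epsilon> > 0\<close> by (simp add: \<delta>_def field_simps add_pos_nonneg)
  finally have v_small: "(\<Sum>\<^sub>\<infinity>e. (cmod (v e))\<^sup>2) < \<epsilon> / 4" .
  show ?thesis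
  proof (rule that[OF \<eta>(3)])
    show "(\<lambda>e. (cmod (curl (\<lambda>z. \<psi> z - of_real (\<eta> z) * \<psi> z) e))\<^sup>2) summable_on UNIV"
      unfolding split by (rule infsum_norm_sq_add_le(1)[OF u_sum v_sum])
    show "(\<Sum>\<^sub>\<infinity>e. (cmod (curl (\<lambda>z. \<psi> z - of_real (\<eta> z) * \<psi> z) e))\<^sup>2) < \<epsilon>"
      unfolding split using infsum_norm_sq_add_le(2)[OF u_sum v_sum] u_small v_small by linarith
  qed
qed

lemma divergence_free_curl_approx:
  assumes "divergence_free c" and summable: "(\<lambda>e. (cmod (c e))\<^sup>2) summable_on UNIV" and "\<epsilon> > 0"
  obtains \<phi> where "finite {z. \<phi> z \<noteq> 0}" "(\<Sum>\<^sub>\<infinity>e. (cmod (c e - curl \<phi> e))\<^sup>2) < \<epsilon>"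
proof -
  obtain \<psi> where \<psi>: "\<And>e. curl \<psi> e = c e"
    using divergence_free_imp_curl[OF \<open>divergence_free c\<close>] by blast
  have \<psi>_sum: "(\<lambda>e. (cmod (curl \<psi> e))\<^sup>2) summable_on UNIV" using summable by (simp add: \<psi>)
  have "\<epsilon> / 4 > 0" using \<open>\<epsilon> > 0\<close> by simp
  obtain M where "M > 0"
    and trunc_sum: "(\<lambda>e. (cmod (curl (\<lambda>z. \<psi> z - trunc M (\<psi> z)) e))\<^sup>2) summable_on UNIV"
    and trunc_small: "(\<Sum>\<^sub>\<infinity>e. (cmod (curl (\<lambda>z. \<psi> z - trunc M (\<psi> z)) e))\<^sup>2) < \<epsilon> / 4"
    using curl_truncation_small[OF \<psi>_sum \<open>\<epsilon> / 4 > 0\<close>] by blast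
  define \<psi>\<^sub>M where "\<psi>\<^sub>M z = trunc M (\<psi> z)" for z
  have "(\<lambda>e. (cmod (curl \<psi> e + - curl (\<lambda>z. \<psi> z - trunc M (\<psi> z)) e))\<^sup>2) summable_on UNIV"
    using summable_on_norm_sq_lincomb[OF \<psi>_sum trunc_sum, of 1 "- 1"] by simp
  then have "(\<lambda>e. (cmod (curl \<psi>\<^sub>M e))\<^sup>2) summable_on UNIV"
    by (simp add: \<psi>\<^sub>M_def curl_def)
  moreover have "cmod (\<psi>\<^sub>M z) \<le> 2 * M" for z
    unfolding \<psi>\<^sub>M_def using \<open>M > 0\<close> by (intro trunc_bound) simp
  ultimately obtain \<eta> :: "int \<times> int \<Rightarrow> real" where "finite {z. \<eta> z \<noteq> 0}"
    and cut_sum: "(\<lambda>e. (cmod (curl (\<lambda>z. \<psi>\<^sub>M z - of_real (\<eta> z) * \<psi>\<^sub>M z) e))\<^sup>2) summable_on UNIV"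
    and cut_small:
      "(\<Sum>\<^sub>\<infinity>e. (cmod (curl (\<lambda>z. \<psi>\<^sub>M z - of_real (\<eta> z) * \<psi>\<^sub>M z) e))\<^sup>2) < \<epsilon> / 4"
    using curl_cutoff_small[of \<psi>\<^sub>M "2 * M" "\<epsilon> / 4"] \<open>\<epsilon> / 4 > 0\<close> by blast
  define \<phi> where "\<phi> z = of_real (\<eta> z) * \<psi>\<^sub>M z" for z
  have "finite {z. \<phi> z \<noteq> 0}"
    by (rule finite_subset[OF _ \<open>finite {z. \<eta> z \<noteq> 0}\<close>]) (auto simp: \<phi>_def)
  moreover have "c e - curl \<phi> e = curl (\<lambda>z. \<psi> z - trunc M (\<psi> z)) e
      + curl (\<lambda>z. \<psi>\<^sub>M z - of_real (\<eta> z) * \<psi>\<^sub>M z) e" for e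
    unfolding \<psi>[symmetric] by (simp add: curl_def \<phi>_def \<psi>\<^sub>M_def algebra_simps)
  then have "(\<Sum>\<^sub>\<infinity>e. (cmod (c e - curl \<phi> e))\<^sup>2) < \<epsilon>"
    using infsum_norm_sq_add_le(2)[OF trunc_sum cut_sum] trunc_small cut_small by simp
  ultimately show ?thesis by (rule that)
qed

section \<open>Eigenfunctions for an eigenvalue in \<open>\<Sigma>\<^sub>0\<close>\<close>

locale robin_eigenfunction =
  fixes a kinv m lam :: real and q0 :: "real \<Rightarrow> real" and B :: real
    and phi phi1 phi2 :: "real \<Rightarrow> complex"
  assumes a_pos: "a > 0" and m_nonneg: "m \<ge> 0"
    and q0_bound: "AE x in lborel. x \<in> {0..1} \<longrightarrow> \<bar>q0 x\<bar> \<le> B"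
    and phi_H2: "H2_triple phi phi1 phi2" and phi_ode: "solves_ode a q0 lam phi phi2"
    and phi_left: "phi 0 - of_real (rho a kinv) * phi1 0 = 0"
    and phi_right: "phi 1 + of_real (rho a kinv) * phi1 1 = 0"
    and phi_nonzero: "\<exists>x\<in>{0..1}. phi x \<noteq> 0"
begin

abbreviation "r \<equiv> complex_of_real (rho a kinv)"

lemma solution_vanishing:
  assumes H: "H2_triple y y1 y2" and S: "solves_ode a q0 lam y y2"
    and zero: "y 0 = 0 \<and> y1 0 = 0 \<or> y 1 = 0 \<and> y1 1 = 0" and x: "x \<in> {0..1}"
  shows "y x = 0 \<and> y1 x = 0"
proof (rule H2_vanishing[OF H _ _ zero x])
  show "(\<bar>B\<bar> + \<bar>lam\<bar>) / a \<ge> 0" using a_pos by simp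
  show "AE x in lborel. x \<in> {0..1} \<longrightarrow> cmod (y2 x) \<le> (\<bar>B\<bar> + \<bar>lam\<bar>) / a * cmod (y x)"
    using q0_bound S unfolding solves_ode_def
  proof eventually_elim
    case (elim x)
    show ?case
    proof
      assume x: "x \<in> {0..1}"
      then have "of_real a * y2 x = of_real (q0 x - lam) * y x" using elim by (simp add: algebra_simps)
      then have "a * cmod (y2 x) = \<bar>q0 x - lam\<bar> * cmod (y x)"
        using a_pos by (metis abs_of_pos norm_mult norm_of_real)
      also have "\<dots> \<le> (\<bar>B\<bar> + \<bar>lam\<bar>) * cmod (y x)" using elim x by (intro mult_right_mono) auto
      finally show "cmod (y2 x) \<le> (\<bar>B\<bar> + \<bar>lam\<bar>) / a * cmod (y x)"
        using a_pos by (simp add: field_simps)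
    qed
  qed
qed

lemma solution_eq_multiple:
  assumes H: "H2_triple w w1 w2" and S: "solves_ode a q0 lam w w2" and b: "b \<in> {0, 1}"
    and val: "w b = k * phi b" and der: "w1 b = k * phi1 b" and x: "x \<in> {0..1}"
  shows "w x = k * phi x \<and> w1 x = k * phi1 x"
proof -
  have "1 * w b + (- k) * phi b = 0 \<and> 1 * w1 b + (- k) * phi1 b = 0" using val der by simp
  then have "1 * w x + (- k) * phi x = 0 \<and> 1 * w1 x + (- k) * phi1 x = 0"
    using solution_vanishing[OF H2_triple_lincomb[OF H phi_H2, of 1 "- k"]
        solves_ode_lincomb[OF S phi_ode, of 1 "- k"] _ x] b by auto
  then show ?thesis by simp
qed

lemma phi1_endpoint_nonzero:
  assumes "b \<in> {0, 1}"
  shows "phi1 b \<noteq> 0"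
proof
  assume "phi1 b = 0"
  then have "phi b = 0" using assms phi_left phi_right by auto
  with \<open>phi1 b = 0\<close> have "\<forall>x\<in>{0..1}. phi x = 0"
    using solution_vanishing[OF phi_H2 phi_ode] assms by blast
  then show False using phi_nonzero by blast
qed

lemma left_robin_solution:
  assumes H: "H2_triple w w1 w2" and S: "solves_ode a q0 lam w w2"
    and L: "w 0 - r * w1 0 = 0" and x: "x \<in> {0..1}"
  shows "w x = (w1 0 / phi1 0) * phi x \<and> w1 x = (w1 0 / phi1 0) * phi1 x"
proof (rule solution_eq_multiple[OF H S _ _ _ x])
  have "phi1 0 \<noteq> 0" using phi1_endpoint_nonzero by simp
  then show "w 0 = w1 0 / phi1 0 * phi 0" "w1 0 = w1 0 / phi1 0 * phi1 0"
    using L phi_left by (simp_all add: field_simps)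
qed simp

lemma right_robin_solution:
  assumes H: "H2_triple w w1 w2" and S: "solves_ode a q0 lam w w2"
    and R: "w 1 + r * w1 1 = 0" and x: "x \<in> {0..1}"
  shows "w x = (w1 1 / phi1 1) * phi x \<and> w1 x = (w1 1 / phi1 1) * phi1 x"
proof (rule solution_eq_multiple[OF H S _ _ _ x])
  have "phi1 1 \<noteq> 0" using phi1_endpoint_nonzero by simp
  moreover have "w 1 = - r * w1 1" "phi 1 = - r * phi1 1"
    using R phi_right by (simp_all add: eq_neg_iff_add_eq_0)
  ultimately show "w 1 = w1 1 / phi1 1 * phi 1" "w1 1 = w1 1 / phi1 1 * phi1 1"
    by (simp_all add: field_simps)
qed simp

lemma robin_left_zero_imp_right_zero:
  assumes "H2_triple w w1 w2" "solves_ode a q0 lam w w2" "w 0 - r * w1 0 = 0"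
  shows "w 1 + r * w1 1 = 0"
proof -
  define k where "k = w1 0 / phi1 0"
  have "w 1 = k * phi 1" "w1 1 = k * phi1 1" using left_robin_solution[OF assms, of 1] by (simp_all add: k_def)
  then have "w 1 + r * w1 1 = k * (phi 1 + r * phi1 1)" by (simp add: algebra_simps)
  then show ?thesis using phi_right by simp
qed

lemma robin_right_zero_imp_left_zero:
  assumes "H2_triple w w1 w2" "solves_ode a q0 lam w w2" "w 1 + r * w1 1 = 0"
  shows "w 0 - r * w1 0 = 0"
proof -
  define k where "k = w1 1 / phi1 1"
  have "w 0 = k * phi 0" "w1 0 = k * phi1 0" using right_robin_solution[OF assms, of 0] by (simp_all add: k_def)
  then have "w 0 - r * w1 0 = k * (phi 0 - r * phi1 0)" by (simp add: algebra_simps)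
  then show ?thesis using phi_left by simp
qed

lemma robin_data_proportional:
  assumes "H2_triple w w1 w2" "solves_ode a q0 lam w w2"
    and "H2_triple v v1 v2" "solves_ode a q0 lam v v2"
  shows "(v 0 - r * v1 0) * (w 1 + r * w1 1) = (w 0 - r * w1 0) * (v 1 + r * v1 1)"
proof -
  define \<alpha> where "\<alpha> = v 0 - r * v1 0"
  define \<beta> where "\<beta> = w 0 - r * w1 0"
  have H: "H2_triple (\<lambda>x. \<alpha> * w x + (- \<beta>) * v x) (\<lambda>x. \<alpha> * w1 x + (- \<beta>) * v1 x)
      (\<lambda>x. \<alpha> * w2 x + (- \<beta>) * v2 x)"
    using H2_triple_lincomb[OF assms(1,3)] .
  have S: "solves_ode a q0 lam (\<lambda>x. \<alpha> * w x + (- \<beta>) * v x) (\<lambda>x. \<alpha> * w2 x + (- \<beta>) * v2 x)"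
    using solves_ode_lincomb[OF assms(2,4)] .
  have "(\<alpha> * w 0 + (- \<beta>) * v 0) - r * (\<alpha> * w1 0 + (- \<beta>) * v1 0) = 0"
    by (simp add: \<alpha>_def \<beta>_def algebra_simps)
  from robin_left_zero_imp_right_zero[OF H S this]
  have "\<alpha> * (w 1 + r * w1 1) + (- \<beta>) * (v 1 + r * v1 1) = 0" by (simp add: algebra_simps)
  then show ?thesis unfolding \<alpha>_def[symmetric] \<beta>_def[symmetric] by simp
qed

lemma eigenfunction_vertex_values_vanish:
  assumes "is_eigenfunction a kinv m q0 lam f"
  shows "snd f v = 0"
proof -
  obtain U1 U2 where H: "\<And>e. H2_triple (fst f e) (U1 e) (U2 e)"
    and S: "\<And>e. solves_ode a q0 lam (fst f e) (U2 e)"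
    and square_summable: "(\<lambda>v. (cmod (snd f v))\<^sup>2) summable_on UNIV"
    and L: "\<And>e. fst f e 0 - r * U1 e 0 = snd f (tail e)"
    and R: "\<And>e. fst f e 1 + r * U1 e 1 = snd f (head e)"
    using assms unfolding is_eigenfunction_def by blast
  define \<omega> where "\<omega> = snd f"
  txt \<open>The edges \<open>((p, q), D0)\<close> and \<open>((p + 1, q), D1)\<close> both end at the \<open>B\<close>-vertex of
    cell \<open>(p, q)\<close>, so proportionality of their Robin data makes \<open>\<omega>\<close> constant along rows.\<close>
  have row_step: "\<omega> ((p, q), True) = \<omega> ((p + 1, q), True)" for p q
  proof -
    define e e' where "e = ((p, q), D0)" and "e' = ((p + 1, q), D1)"
    have ends: "tail e = ((p, q), True)" "tail e' = ((p + 1, q), True)"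
      "head e = ((p, q), False)" "head e' = ((p, q), False)"
      by (simp_all add: e_def e'_def tail_def head_def)
    show ?thesis
    proof (cases "\<omega> ((p, q), False) = 0")
      case True
      then show ?thesis
        using robin_right_zero_imp_left_zero[OF H S, of e] robin_right_zero_imp_left_zero[OF H S, of e']
          L R ends by (simp add: \<omega>_def)
    next
      case False
      then show ?thesis
        using robin_data_proportional[OF H S H S, of e e'] L R ends by (simp add: \<omega>_def)
    qed
  qed
  have row_const: "\<omega> ((p + int n, q), True) = \<omega> ((p, q), True)" for p q n
  proof (induction n)
    case (Suc n)
    have "\<omega> ((p + int (Suc n), q), True) = \<omega> ((p + int n + 1, q), True)" by (simp add: algebra_simps)
    also have "\<dots> = \<omega> ((p, q), True)" using row_step[of "p + int n" q] Suc by simp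
    finally show ?case .
  qed simp
  have A_zero: "\<omega> ((p, q), True) = 0" for p q
  proof (rule square_summable_constant_on_infinite[OF square_summable[folded \<omega>_def]])
    show "infinite (range (\<lambda>n::nat. ((p + int n, q), True)))"
      by (rule range_inj_infinite) (auto simp: inj_def)
  qed (use row_const in auto)
  have B_zero: "\<omega> ((p, q), False) = 0" for p q
    using robin_left_zero_imp_right_zero[OF H S, of "((p, q), D0)"] L R A_zero
    by (simp add: \<omega>_def tail_def head_def)
  show ?thesis
    using A_zero B_zero by (cases v) (metis (full_types) \<omega>_def prod.collapse)
qed

lemma phi_continuous: "continuous_on {0..1} phi"
  using H2_triple_continuous[OF phi_H2] by simp

definition phi_norm2 :: real where
  "phi_norm2 = (LINT x:{0..1}|lborel. (cmod (phi x))\<^sup>2)"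

lemma phi_norm2_pos: "phi_norm2 > 0"
proof -
  have cont: "continuous_on {0..1} (\<lambda>x. (cmod (phi x))\<^sup>2)"
    by (intro continuous_intros phi_continuous)
  have int: "set_integrable lborel {0..1} (\<lambda>x. (cmod (phi x))\<^sup>2)"
    by (rule set_integrable_norm_sq_continuous[OF phi_continuous])
  have has_int: "((\<lambda>x. (cmod (phi x))\<^sup>2) has_integral phi_norm2) {0..1}"
    unfolding phi_norm2_def using set_borel_integral_eq_integral[OF int] has_integral_integral by metis
  obtain x where x: "x \<in> {0..1}" "phi x \<noteq> 0" using phi_nonzero by blast
  have "phi_norm2 \<noteq> 0"
  proof
    assume "phi_norm2 = 0"
    then have "(cmod (phi x))\<^sup>2 = 0"
      using has_integral_0_cbox_imp_0[of 0 1 "\<lambda>x. (cmod (phi x))\<^sup>2" x] cont has_int x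
      by (simp add: box_real)
    then show False using x by simp
  qed
  moreover have "phi_norm2 \<ge> 0"
    unfolding phi_norm2_def set_lebesgue_integral_def by (rule Bochner_Integration.integral_nonneg) auto
  ultimately show ?thesis by simp
qed

lemma eigenfunction_flow_coefficients:
  assumes "is_eigenfunction a kinv m q0 lam f"
  obtains c where "divergence_free c" "(\<lambda>e. (cmod (c e))\<^sup>2) summable_on UNIV"
    "\<And>e x. x \<in> {0..1} \<Longrightarrow> fst f e x = c e * phi x"
proof -
  obtain U1 U2 where H: "\<And>e. H2_triple (fst f e) (U1 e) (U2 e)"
    and S: "\<And>e. solves_ode a q0 lam (fst f e) (U2 e)"
    and energy: "(\<lambda>e. LINT x:{0..1}|lborel.
        (cmod (fst f e x))\<^sup>2 + (cmod (U1 e x))\<^sup>2 + (cmod (U2 e x))\<^sup>2) summable_on UNIV"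
    and L: "\<And>e. fst f e 0 - r * U1 e 0 = snd f (tail e)"
    and K: "\<And>v. of_real a * ((\<Sum>e\<in>{e. tail e = v}. - U1 e 0) + (\<Sum>e\<in>{e. head e = v}. U1 e 1))
        = of_real (lam * m) * snd f v"
    using assms unfolding is_eigenfunction_def by blast
  have \<omega>: "snd f v = 0" for v by (rule eigenfunction_vertex_values_vanish[OF assms])
  define c where "c e = U1 e 0 / phi1 0" for e
  have u: "fst f e x = c e * phi x \<and> U1 e x = c e * phi1 x" if "x \<in> {0..1}" for e x
    using left_robin_solution[OF H S _ that] L \<omega> by (simp add: c_def)
  have "(\<Sum>e\<in>{e. tail e = v}. - phi1 0 * c e) + (\<Sum>e\<in>{e. head e = v}. phi1 1 * c e) = 0" for v
    using K[of v] \<omega> a_pos u[of 0] u[of 1] by (simp add: mult.commute)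
  then have "divergence_free c"
    using vertex_sums_zero_iff_divergence_free[of "- phi1 0" "phi1 1" c] phi1_endpoint_nonzero by simp
  moreover have "(\<lambda>e. (cmod (c e))\<^sup>2) summable_on UNIV"
  proof -
    have "(cmod (c e))\<^sup>2 * phi_norm2
        \<le> (LINT x:{0..1}|lborel. (cmod (fst f e x))\<^sup>2 + (cmod (U1 e x))\<^sup>2 + (cmod (U2 e x))\<^sup>2)" for e
    proof -
      have "(cmod (c e))\<^sup>2 * phi_norm2 = (LINT x:{0..1}|lborel. (cmod (fst f e x))\<^sup>2)"
        unfolding phi_norm2_def
        by (subst set_integral_mult_right[symmetric], rule set_lebesgue_integral_cong)
          (auto simp: u norm_mult power_mult_distrib)
      also have "\<dots> \<le> (LINT x:{0..1}|lborel. (cmod (fst f e x))\<^sup>2 + (cmod (U1 e x))\<^sup>2 + (cmod (U2 e x))\<^sup>2)"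
      proof -
        have "set_integrable lborel {0..1} (\<lambda>x. (cmod (fst f e x))\<^sup>2)"
          "set_integrable lborel {0..1} (\<lambda>x. (cmod (U1 e x))\<^sup>2)"
          using H2_triple_continuous[OF H[of e]] by (simp_all add: set_integrable_norm_sq_continuous)
        moreover have "set_integrable lborel {0..1} (\<lambda>x. (cmod (U2 e x))\<^sup>2)"
          using H[of e] by (simp add: H2_triple_def)
        ultimately show ?thesis by (intro set_integral_mono set_integral_add) auto
      qed
      finally show ?thesis .
    qed
    then have "(\<lambda>e. (cmod (c e))\<^sup>2 * phi_norm2) summable_on UNIV"
      using phi_norm2_pos by (intro summable_on_comparison_test[OF energy]) auto
    then show ?thesis using summable_on_cmult_left'[of phi_norm2 "\<lambda>e. (cmod (c e))\<^sup>2"] phi_norm2_pos by simp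
  qed
  ultimately show ?thesis using that u by blast
qed

definition flow_state :: "(edge \<Rightarrow> complex) \<Rightarrow> state" where
  "flow_state c = ((\<lambda>e x. c e * phi x), (\<lambda>v. 0))"

lemma eigenfunction_flow_state:
  assumes "divergence_free c" "(\<lambda>e. (cmod (c e))\<^sup>2) summable_on UNIV"
  shows "is_eigenfunction a kinv m q0 lam (flow_state c)"
  unfolding is_eigenfunction_def
proof (intro exI conjI allI)
  fix e
  show "H2_triple (fst (flow_state c) e) (\<lambda>x. c e * phi1 x) (\<lambda>x. c e * phi2 x)"
    using H2_triple_lincomb[OF phi_H2 phi_H2, of "c e" 0] by (simp add: flow_state_def)
  show "solves_ode a q0 lam (fst (flow_state c) e) (\<lambda>x. c e * phi2 x)"
    using solves_ode_lincomb[OF phi_ode phi_ode, of "c e" 0] by (simp add: flow_state_def)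
  show "fst (flow_state c) e 0 - r * (c e * phi1 0) = snd (flow_state c) (tail e)"
    "fst (flow_state c) e 1 + r * (c e * phi1 1) = snd (flow_state c) (head e)"
    using phi_left phi_right by (simp_all add: flow_state_def algebra_simps flip: distrib_left)
next
  define energy where "energy = (LINT x:{0..1}|lborel. (cmod (phi x))\<^sup>2 + (cmod (phi1 x))\<^sup>2 + (cmod (phi2 x))\<^sup>2)"
  have "(LINT x:{0..1}|lborel. (cmod (c e * phi x))\<^sup>2 + (cmod (c e * phi1 x))\<^sup>2 + (cmod (c e * phi2 x))\<^sup>2)
      = (cmod (c e))\<^sup>2 * energy" for e
    unfolding energy_def by (simp add: norm_mult power_mult_distrib flip: distrib_left)
  then show "(\<lambda>e. LINT x:{0..1}|lborel. (cmod (fst (flow_state c) e x))\<^sup>2 + (cmod (c e * phi1 x))\<^sup>2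
      + (cmod (c e * phi2 x))\<^sup>2) summable_on UNIV"
    using summable_on_cmult_left[OF assms(2), of energy] by (simp add: flow_state_def)
next
  show "(\<lambda>v. (cmod (snd (flow_state c) v))\<^sup>2) summable_on UNIV" by (simp add: flow_state_def)
  have "- phi1 0 \<noteq> 0" "phi1 1 \<noteq> 0" using phi1_endpoint_nonzero by auto
  then have kirchhoff: "\<forall>v. (\<Sum>e\<in>{e. tail e = v}. - phi1 0 * c e) + (\<Sum>e\<in>{e. head e = v}. phi1 1 * c e) = 0"
    using vertex_sums_zero_iff_divergence_free assms(1) by blast
  show "of_real a * ((\<Sum>e\<in>{e. tail e = v}. - (c e * phi1 0)) + (\<Sum>e\<in>{e. head e = v}. c e * phi1 1))
      = of_real (lam * m) * snd (flow_state c) v" for v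
    using kirchhoff[rule_format, of v] by (simp add: flow_state_def mult.commute)
qed

end

context robin_eigenfunction
begin

lemma integral_norm_sq_multiple_phi:
  assumes "\<And>x. x \<in> {0..1} \<Longrightarrow> g x = k * phi x"
  shows "(LINT x:{0..1}|lborel. (cmod (g x))\<^sup>2) = (cmod k)\<^sup>2 * phi_norm2"
proof -
  have "(LINT x:{0..1}|lborel. (cmod (g x))\<^sup>2) = (LINT x:{0..1}|lborel. (cmod k)\<^sup>2 * (cmod (phi x))\<^sup>2)"
    by (rule set_lebesgue_integral_cong) (auto simp: assms norm_mult power_mult_distrib)
  then show ?thesis unfolding phi_norm2_def by simp
qed

lemma Hnorm2_flow_form:
  assumes "\<And>e x. x \<in> {0..1} \<Longrightarrow> fst g e x = k e * phi x" "\<And>v. snd g v = 0"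
  shows "Hnorm2 m g = (\<Sum>\<^sub>\<infinity>e. (cmod (k e))\<^sup>2) * phi_norm2"
proof -
  have "(LINT x:{0..1}|lborel. (cmod (fst g e x))\<^sup>2) = (cmod (k e))\<^sup>2 * phi_norm2" for e
    by (rule integral_norm_sq_multiple_phi) (use assms in auto)
  then show ?thesis unfolding Hnorm2_def using assms(2) by (simp add: infsum_cmult_left')
qed

lemma Hinner_flow_state:
  "Hinner m (flow_state c) (flow_state d) = (\<Sum>\<^sub>\<infinity>e. c e * cnj (d e)) * of_real phi_norm2"
proof -
  have "(LINT x:{0..1}|lborel. c e * phi x * cnj (d e * phi x)) = c e * cnj (d e) * of_real phi_norm2" for e
  proof -
    have "(LINT x:{0..1}|lborel. c e * phi x * cnj (d e * phi x))
        = (LINT x:{0..1}|lborel. (c e * cnj (d e)) * complex_of_real ((cmod (phi x))\<^sup>2))"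
      by (rule set_lebesgue_integral_cong)
        (auto simp: complex_norm_square[symmetric] algebra_simps simp del: of_real_power)
    also have "\<dots> = c e * cnj (d e) * of_real phi_norm2"
      by (simp add: set_integral_complex_of_real phi_norm2_def del: of_real_power)
    finally show ?thesis .
  qed
  then show ?thesis unfolding Hinner_def flow_state_def by (simp add: infsum_cmult_left')
qed

lemma orthonormal_eigenfunctions:
  "\<exists>F. (\<forall>i<(N::nat). is_eigenfunction a kinv m q0 lam (F i)) \<and>
       (\<forall>i<N. \<forall>j<N. Hinner m (F i) (F j) = (if i = j then 1 else 0))"
proof -
  define s where "s = 1 / sqrt (6 * phi_norm2)"
  define F where "F i = flow_state (\<lambda>e. of_real s * hexagon_flow (3 * int i, 0) e)" for i
  have "is_eigenfunction a kinv m q0 lam (F i)" for i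
    unfolding F_def
  proof (rule eigenfunction_flow_state)
    show "divergence_free (\<lambda>e. of_real s * hexagon_flow (3 * int i, 0) e)"
      unfolding hexagon_flow_def by (intro divergence_free_scale divergence_free_curl)
    show "(\<lambda>e. (cmod (of_real s * hexagon_flow (3 * int i, 0) e))\<^sup>2) summable_on UNIV"
      by (rule summable_on_finite_support[OF finite_hexagon[of "(3 * int i, 0)"]])
        (simp add: hexagon_flow_outside)
  qed
  moreover have "Hinner m (F i) (F j) = (if i = j then 1 else 0)" for i j
  proof -
    have s2: "s * s * phi_norm2 = 1 / 6" using phi_norm2_pos by (simp add: s_def)
    have "Hinner m (F i) (F j)
        = of_real (s * s * phi_norm2) * (\<Sum>\<^sub>\<infinity>e. hexagon_flow (3 * int i, 0) e * cnj (hexagon_flow (3 * int j, 0) e))"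
      unfolding F_def Hinner_flow_state by (simp add: algebra_simps infsum_cmult_right')
    moreover have "hexagon (3 * int i, 0) \<inter> hexagon (3 * int j, 0) = {}" if "i \<noteq> j"
      using that by (auto simp: hexagon_def)
    ultimately show ?thesis using s2 hexagon_flow_norm hexagon_flows_orthogonal by auto
  qed
  ultimately show ?thesis by (intro exI[of _ F]) simp
qed

lemma loop_state_hexagon_flow: "is_loop_state a kinv m q0 lam (flow_state (hexagon_flow z))"
proof -
  have "is_eigenfunction a kinv m q0 lam (flow_state (hexagon_flow z))"
  proof (rule eigenfunction_flow_state)
    show "divergence_free (hexagon_flow z)" unfolding hexagon_flow_def by (rule divergence_free_curl)
    show "(\<lambda>e. (cmod (hexagon_flow z e))\<^sup>2) summable_on UNIV"
      by (rule summable_on_finite_support[OF finite_hexagon[of z]]) (simp add: hexagon_flow_outside)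
  qed
  moreover have "\<forall>e. e \<notin> hexagon z \<longrightarrow> (\<forall>x\<in>{0..1}. fst (flow_state (hexagon_flow z)) e x = 0)"
    by (simp add: flow_state_def hexagon_flow_outside)
  moreover have "\<forall>v. snd (flow_state (hexagon_flow z)) v = 0" by (simp add: flow_state_def)
  ultimately show ?thesis unfolding is_loop_state_def by blast
qed

lemma eigenfunction_in_closed_loop_span:
  assumes "is_eigenfunction a kinv m q0 lam f"
  shows "in_closed_loop_span a kinv m q0 lam f"
  unfolding in_closed_loop_span_def
proof (intro allI impI)
  fix \<epsilon> :: real assume "\<epsilon> > 0"
  obtain c where c: "divergence_free c" "(\<lambda>e. (cmod (c e))\<^sup>2) summable_on UNIV"
    and u: "\<And>e x. x \<in> {0..1} \<Longrightarrow> fst f e x = c e * phi x"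
    using eigenfunction_flow_coefficients[OF assms] by blast
  have "\<epsilon> / phi_norm2 > 0" using \<open>\<epsilon> > 0\<close> phi_norm2_pos by simp
  then obtain \<psi> where fin: "finite {z. \<psi> z \<noteq> 0}"
    and small: "(\<Sum>\<^sub>\<infinity>e. (cmod (c e - curl \<psi> e))\<^sup>2) < \<epsilon> / phi_norm2"
    using divergence_free_curl_approx[OF c] by blast
  obtain zs where zs: "set zs = {z. \<psi> z \<noteq> 0}" "distinct zs" using finite_distinct_list[OF fin] by blast
  define F where "F i = flow_state (hexagon_flow (zs ! i))" for i
  define coef where "coef i = \<psi> (zs ! i)" for i
  have sum_eq: "(\<Sum>i<length zs. coef i * hexagon_flow (zs ! i) e) = curl \<psi> e" for e
  proof -
    have "(\<Sum>i<length zs. coef i * hexagon_flow (zs ! i) e) = (\<Sum>z\<in>set zs. \<psi> z * hexagon_flow z e)"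
      unfolding coef_def using zs(2)
      by (simp add: sum.distinct_set_conv_list sum_list_sum_nth lessThan_atLeast0)
    also have "\<dots> = curl \<psi> e" unfolding zs(1) by (rule curl_eq_sum_hexagon_flows[symmetric, OF fin]) simp
    finally show ?thesis .
  qed
  have "fst (lincomb coef F (length zs)) e x = (\<Sum>i<length zs. coef i * hexagon_flow (zs ! i) e) * phi x"
    for e x by (simp add: lincomb_def F_def flow_state_def sum_distrib_right mult.assoc)
  then have lincomb: "fst (lincomb coef F (length zs)) e x = curl \<psi> e * phi x"
    "snd (lincomb coef F (length zs)) v = 0" for e x v
    by (simp_all add: sum_eq lincomb_def F_def flow_state_def)
  have "Hnorm2 m (state_diff f (lincomb coef F (length zs)))
      = (\<Sum>\<^sub>\<infinity>e. (cmod (c e - curl \<psi> e))\<^sup>2) * phi_norm2"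
    using eigenfunction_vertex_values_vanish[OF assms]
    by (intro Hnorm2_flow_form) (simp_all add: state_diff_def lincomb u algebra_simps)
  also have "\<dots> < \<epsilon>" using small phi_norm2_pos by (simp add: field_simps)
  finally show "\<exists>n c F. (\<forall>i<n. is_loop_state a kinv m q0 lam (F i))
      \<and> Hnorm2 m (state_diff f (lincomb c F n)) < \<epsilon>"
    by (intro exI[of _ "length zs"] exI[of _ coef] exI[of _ F]) (simp add: F_def loop_state_hexagon_flow)
qed

end

context robin_eigenfunction
begin

lemma integral_norm_sq_diff_multiple_phi:
  assumes mg: "set_borel_measurable lborel {0..1} g"
    and ig: "set_integrable lborel {0..1} (\<lambda>x. (cmod (g x))\<^sup>2)"
  shows "(LINT x:{0..1}|lborel. (cmod (g x - d * phi x))\<^sup>2)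
       = (LINT x:{0..1}|lborel. (cmod (g x))\<^sup>2)
         - 2 * Re (cnj d * (LINT x:{0..1}|lborel. g x * cnj (phi x))) + (cmod d)\<^sup>2 * phi_norm2"
proof -
  have iphi: "set_integrable lborel {0..1} (\<lambda>x. (cmod (phi x))\<^sup>2)"
    by (rule set_integrable_norm_sq_continuous[OF phi_continuous])
  have "set_integrable lborel {0..1} (\<lambda>x. g x * cnj (phi x))"
    by (rule set_integrable_mult_cnj[OF mg set_borel_measurable_continuous[OF phi_continuous] ig iphi])
  then have icross: "set_integrable lborel {0..1} (\<lambda>x. cnj d * (g x * cnj (phi x)))" by simp
  have iRe: "set_integrable lborel {0..1} (\<lambda>x. 2 * Re (cnj d * (g x * cnj (phi x))))"
    by (intro set_integrable_mult_right set_integrable_Re(1)[OF icross])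
  have "(LINT x:{0..1}|lborel. (cmod (g x - d * phi x))\<^sup>2)
      = (LINT x:{0..1}|lborel. ((cmod (g x))\<^sup>2 - 2 * Re (cnj d * (g x * cnj (phi x))))
          + (cmod d)\<^sup>2 * (cmod (phi x))\<^sup>2)"
    unfolding cmod_power2 by (simp add: power2_eq_square algebra_simps)
  also have "\<dots> = (LINT x:{0..1}|lborel. (cmod (g x))\<^sup>2)
      - (LINT x:{0..1}|lborel. 2 * Re (cnj d * (g x * cnj (phi x))))
      + (LINT x:{0..1}|lborel. (cmod d)\<^sup>2 * (cmod (phi x))\<^sup>2)"
    using ig iRe iphi by (simp add: set_integral_add(2) set_integral_diff(1,2))
  also have "(LINT x:{0..1}|lborel. 2 * Re (cnj d * (g x * cnj (phi x))))
      = 2 * Re (cnj d * (LINT x:{0..1}|lborel. g x * cnj (phi x)))"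
    by (simp only: set_integral_mult_right set_integrable_Re(2)[OF icross])
  also have "(LINT x:{0..1}|lborel. (cmod d)\<^sup>2 * (cmod (phi x))\<^sup>2) = (cmod d)\<^sup>2 * phi_norm2"
    unfolding phi_norm2_def by simp
  finally show ?thesis .
qed

definition phi_coef :: "(real \<Rightarrow> complex) \<Rightarrow> complex" where
  "phi_coef g = (LINT x:{0..1}|lborel. g x * cnj (phi x)) / of_real phi_norm2"

lemma integral_norm_sq_diff_phi_pythagoras:
  assumes "set_borel_measurable lborel {0..1} g"
    and "set_integrable lborel {0..1} (\<lambda>x. (cmod (g x))\<^sup>2)"
  shows "(LINT x:{0..1}|lborel. (cmod (g x - d * phi x))\<^sup>2)
       = (LINT x:{0..1}|lborel. (cmod (g x - phi_coef g * phi x))\<^sup>2) + (cmod (phi_coef g - d))\<^sup>2 * phi_norm2"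
proof -
  define c where "c = phi_coef g"
  have J: "(LINT x:{0..1}|lborel. g x * cnj (phi x)) = c * of_real phi_norm2"
    using phi_norm2_pos by (simp add: c_def phi_coef_def)
  have r1: "Re (cnj d * (c * of_real phi_norm2)) = phi_norm2 * Re (cnj d * c)"
    and r2: "Re (cnj c * (c * of_real phi_norm2)) = phi_norm2 * (cmod c)\<^sup>2"
    and r3: "(cmod (c - d))\<^sup>2 = (cmod c)\<^sup>2 - 2 * Re (cnj d * c) + (cmod d)\<^sup>2"
    unfolding cmod_power2 by (simp_all add: power2_eq_square algebra_simps)
  show ?thesis
    unfolding integral_norm_sq_diff_multiple_phi[OF assms] c_def[symmetric] J r1 r2 r3
    by (simp add: algebra_simps)
qed

lemma lincomb_eigenfunctions_flow_form:
  assumes "\<forall>i<n. is_eigenfunction a kinv m q0 lam (F i)"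
  obtains D where "divergence_free D" "(\<lambda>e. (cmod (D e))\<^sup>2) summable_on UNIV"
    "\<And>e x. x \<in> {0..1} \<Longrightarrow> fst (lincomb coef F n) e x = D e * phi x"
    "\<And>v. snd (lincomb coef F n) v = 0"
  using assms
proof (induction n arbitrary: thesis)
  case 0
  show ?case by (rule "0.prems"(1)[of "\<lambda>e. 0"]) (simp_all add: lincomb_def divergence_free_zero)
next
  case (Suc n)
  obtain D where D: "divergence_free D" "(\<lambda>e. (cmod (D e))\<^sup>2) summable_on UNIV"
    "\<And>e x. x \<in> {0..1} \<Longrightarrow> fst (lincomb coef F n) e x = D e * phi x"
    "\<And>v. snd (lincomb coef F n) v = 0"
    using Suc.IH Suc.prems(2) by auto
  have eig: "is_eigenfunction a kinv m q0 lam (F n)" using Suc.prems(2) by simp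
  obtain d where d: "divergence_free d" "(\<lambda>e. (cmod (d e))\<^sup>2) summable_on UNIV"
    "\<And>e x. x \<in> {0..1} \<Longrightarrow> fst (F n) e x = d e * phi x"
    using eigenfunction_flow_coefficients[OF eig] by blast
  show ?case
  proof (rule Suc.prems(1)[of "\<lambda>e. 1 * D e + coef n * d e"])
    show "divergence_free (\<lambda>e. 1 * D e + coef n * d e)"
      using divergence_free_add[OF D(1) divergence_free_scale[OF d(1), of "coef n"]] by simp
    show "(\<lambda>e. (cmod (1 * D e + coef n * d e))\<^sup>2) summable_on UNIV"
      by (rule summable_on_norm_sq_lincomb[OF D(2) d(2)])
    show "fst (lincomb coef F (Suc n)) e x = (1 * D e + coef n * d e) * phi x" if "x \<in> {0..1}" for e x
      using D(3)[OF that] d(3)[OF that] by (simp add: lincomb_def algebra_simps)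
    show "snd (lincomb coef F (Suc n)) v = 0" for v
      using D(4)[of v] eigenfunction_vertex_values_vanish[OF eig, of v] by (simp add: lincomb_def)
  qed
qed

lemma closed_loop_span_imp_eigenfunction:
  assumes "in_H m f" and "in_closed_loop_span a kinv m q0 lam f"
  shows "\<exists>g. is_eigenfunction a kinv m q0 lam g \<and> Hnorm2 m (state_diff f g) = 0"
proof -
  have meas: "\<And>e. set_borel_measurable lborel {0..1} (fst f e)"
    and int: "\<And>e. set_integrable lborel {0..1} (\<lambda>x. (cmod (fst f e x))\<^sup>2)"
    and summable: "(\<lambda>e. LINT x:{0..1}|lborel. (cmod (fst f e x))\<^sup>2) summable_on UNIV"
    using assms(1) unfolding in_H_def by auto
  define c where "c e = phi_coef (fst f e)" for e
  define S where "S e = (LINT x:{0..1}|lborel. (cmod (fst f e x - c e * phi x))\<^sup>2)" for e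
  define V where "V = (\<Sum>\<^sub>\<infinity>v. (cmod (snd f v))\<^sup>2)"
  have S_nonneg: "S e \<ge> 0" for e
    unfolding S_def set_lebesgue_integral_def by (rule Bochner_Integration.integral_nonneg) auto
  have V_nonneg: "V \<ge> 0" unfolding V_def by (rule infsum_nonneg) auto
  have pythagoras: "(LINT x:{0..1}|lborel. (cmod (fst f e x - d * phi x))\<^sup>2)
      = S e + (cmod (c e - d))\<^sup>2 * phi_norm2" for e d
    unfolding S_def c_def by (rule integral_norm_sq_diff_phi_pythagoras[OF meas int])
  have c_summable: "(\<lambda>e. (cmod (c e))\<^sup>2) summable_on UNIV"
  proof -
    have "(\<lambda>e. (cmod (c e))\<^sup>2 * phi_norm2) summable_on UNIV"
      using pythagoras[of _ 0] S_nonneg phi_norm2_pos by (intro summable_on_comparison_test[OF summable]) auto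
    then show ?thesis using summable_on_cmult_left'[of phi_norm2 "\<lambda>e. (cmod (c e))\<^sup>2"] phi_norm2_pos by simp
  qed
  have S_summable: "S summable_on UNIV"
    using pythagoras[of _ 0] S_nonneg phi_norm2_pos by (intro summable_on_comparison_test[OF summable]) auto
  have approx: "\<exists>D. divergence_free D \<and> infsum S UNIV + m * V < \<epsilon>
      \<and> (\<forall>e. (cmod (c e - D e))\<^sup>2 * phi_norm2 < \<epsilon>)"
    if "\<epsilon> > 0" for \<epsilon>
  proof -
    obtain n coef F where loops: "\<forall>i<n. is_loop_state a kinv m q0 lam (F i)"
      and close: "Hnorm2 m (state_diff f (lincomb coef F n)) < \<epsilon>"
      using assms(2) \<open>\<epsilon> > 0\<close> unfolding in_closed_loop_span_def by blast
    obtain D where D: "divergence_free D" "(\<lambda>e. (cmod (D e))\<^sup>2) summable_on UNIV"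
      "\<And>e x. x \<in> {0..1} \<Longrightarrow> fst (lincomb coef F n) e x = D e * phi x"
      "\<And>v. snd (lincomb coef F n) v = 0"
      using lincomb_eigenfunctions_flow_form[of n F] loops unfolding is_loop_state_def by blast
    define T where "T e = S e + (cmod (c e - D e))\<^sup>2 * phi_norm2" for e
    have "Hnorm2 m (state_diff f (lincomb coef F n)) = infsum T UNIV + m * V"
    proof -
      have "(LINT x:{0..1}|lborel. (cmod (fst f e x - fst (lincomb coef F n) e x))\<^sup>2) = T e" for e
        unfolding T_def pythagoras[symmetric] by (rule set_lebesgue_integral_cong) (simp_all add: D(3))
      then show ?thesis unfolding Hnorm2_def state_diff_def V_def by (simp add: D(4))
    qed
    with close have close': "infsum T UNIV + m * V < \<epsilon>" by simp
    have T_nonneg: "T e \<ge> 0" for e unfolding T_def using S_nonneg phi_norm2_pos by simp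
    have "(\<lambda>e. (cmod (1 * c e + (- 1) * D e))\<^sup>2) summable_on UNIV"
      by (rule summable_on_norm_sq_lincomb[OF c_summable D(2)])
    then have T_summable: "T summable_on UNIV"
      unfolding T_def using S_summable by (intro summable_on_add summable_on_cmult_left) simp_all
    have "infsum S UNIV \<le> infsum T UNIV"
      by (rule infsum_mono[OF S_summable T_summable]) (simp add: T_def less_imp_le[OF phi_norm2_pos])
    moreover have "(cmod (c e - D e))\<^sup>2 * phi_norm2 < \<epsilon>" for e
    proof -
      have "(cmod (c e - D e))\<^sup>2 * phi_norm2 \<le> T e" using S_nonneg by (simp add: T_def)
      also have "\<dots> \<le> infsum T UNIV"
        using infsum_mono2[OF _ T_summable, of "{e}"] T_nonneg by simp
      also have "\<dots> < \<epsilon>" using close' m_nonneg V_nonneg by (smt (verit) mult_nonneg_nonneg)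
      finally show ?thesis .
    qed
    ultimately show ?thesis using D(1) close' by (intro exI[of _ D]) auto
  qed
  have residual_zero: "infsum S UNIV + m * V = 0"
  proof (rule antisym)
    show "infsum S UNIV + m * V \<le> 0"
    proof (rule field_le_epsilon)
      fix \<epsilon> :: real assume "\<epsilon> > 0"
      then show "infsum S UNIV + m * V \<le> 0 + \<epsilon>" using approx[of \<epsilon>] by auto
    qed
    show "infsum S UNIV + m * V \<ge> 0"
      using infsum_nonneg[of UNIV S] S_nonneg V_nonneg m_nonneg by simp
  qed
  have "divergence_free c"
  proof (rule divergence_free_approx)
    fix \<delta> :: real assume "\<delta> > 0"
    then obtain D where D: "divergence_free D" "\<forall>e. (cmod (c e - D e))\<^sup>2 * phi_norm2 < \<delta>\<^sup>2 * phi_norm2"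
      using approx[of "\<delta>\<^sup>2 * phi_norm2"] phi_norm2_pos by auto
    have "cmod (c e - D e) < \<delta>" for e
    proof -
      have "(cmod (c e - D e))\<^sup>2 < \<delta>\<^sup>2" using D(2)[rule_format, of e] phi_norm2_pos by simp
      then show ?thesis using \<open>\<delta> > 0\<close> by (simp add: power_less_imp_less_base)
    qed
    with D(1) show "\<exists>D. divergence_free D \<and> (\<forall>e. norm (c e - D e) < \<delta>)" by auto
  qed
  moreover have "Hnorm2 m (state_diff f (flow_state c)) = infsum S UNIV + m * V"
    unfolding Hnorm2_def state_diff_def flow_state_def S_def V_def by simp
  ultimately show ?thesis
    using eigenfunction_flow_state c_summable residual_zero by (intro exI[of _ "flow_state c"]) simp
qed

end

theorem mainTheorem4:
  fixes a kinv m lam :: real and q0 :: "real \<Rightarrow> real"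
  assumes "a > 0" and "kinv \<ge> 0" and "m \<ge> 0"
    and "set_borel_measurable lborel {0..1} q0"
    and "\<exists>B. AE x in lborel. x \<in> {0..1} \<longrightarrow> \<bar>q0 x\<bar> \<le> B"
    and "AE x in lborel. x \<in> {0..1} \<longrightarrow> q0 x = q0 (1 - x)"
    and "lam \<in> Sigma0 a kinv q0"
  shows "(\<forall>N::nat. \<exists>F. (\<forall>i<N. is_eigenfunction a kinv m q0 lam (F i)) \<and>
                  (\<forall>i<N. \<forall>j<N. Hinner m (F i) (F j) = (if i = j then 1 else 0)))
       \<and> (\<forall>f. is_eigenfunction a kinv m q0 lam f \<longrightarrow> in_closed_loop_span a kinv m q0 lam f)
       \<and> (\<forall>f. in_H m f \<longrightarrow> in_closed_loop_span a kinv m q0 lam f \<longrightarrow>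
              (\<exists>g. is_eigenfunction a kinv m q0 lam g \<and> Hnorm2 m (state_diff f g) = 0))"
proof -
  obtain B where "AE x in lborel. x \<in> {0..1} \<longrightarrow> \<bar>q0 x\<bar> \<le> B" using assms(5) by blast
  moreover obtain phi phi1 phi2 where "H2_triple phi phi1 phi2" "solves_ode a q0 lam phi phi2"
    "phi 0 - of_real (rho a kinv) * phi1 0 = 0" "phi 1 + of_real (rho a kinv) * phi1 1 = 0"
    "\<exists>x\<in>{0..1}. phi x \<noteq> 0"
    using assms(7) unfolding Sigma0_def by blast
  ultimately interpret robin_eigenfunction a kinv m lam q0 B phi phi1 phi2
    using assms(1,3) by unfold_locales
  show ?thesis
    using orthonormal_eigenfunctions eigenfunction_in_closed_loop_span closed_loop_span_imp_eigenfunction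
    by blast
qed

end
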